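(* The expected time for SEMO and GSEMO to find the whole Pareto front on \textsc{OneMinMax} is $O(n\log n)$ when using the Non-Minimum Uniform at Random (NMUAR) parent selection scheme with either the crowding distance contribution or the hypervolume contribution with reference point $(-r,-r)$ for some $r\ge 1$.
   Context: Search space $\{0,1\}^n$; objectives maximised. $\textsc{OneMinMax}(x)=(\sum_ix_i,\,n-\sum_ix_i)$; every point is Pareto optimal and the Pareto front is $F^*=\{(i,n-i):0\le i\le n\}$. Dominance: $y$ dominates $x$ if $f_i(y)\ge f_i(x)$ for all $i$, strictly for some $i$; weakly dominates if $\ge$ in all. SEMO/GSEMO with diversity-based parent selection: start with uniform random $s$, $P=\{s\}$. Each iteration: compute the diversity score of each $x\in P$ w.r.t. $P$; choose a parent by the selection mechanism; create $s'$ by flipping one uniformly random bit (SEMO) or each bit independently with probability $1/n$ (GSEMO); if $s'$ is not dominated by any member of $P$, add it and remove all members weakly dominated by $s'$. Time = number of iterations until $f(P)=F^*$. NMUAR: if the individuals of $P$ do not all have the same diversity score, discard all individuals with the minimum score and select uniformly at random among the remaining ones; otherwise select uniformly at random from $P$. HVC with reference point $(r_1,r_2)$: sort population by increasing $f_1$ as $x_1,\dots,x_\mu$, set $f_1(x_0)=r_1$, $f_2(x_{\mu+1})=r_2$, $\mathrm{HVC}(x_i,P)=(f_1(x_i)-f_1(x_{i-1}))(f_2(x_i)-f_2(x_{i+1}))$. CDC: each point starts at 0; for each objective $m$, sort ascending by $f_m$, boundary points get $\infty$, intermediate $P[i]$ gets $+(f_m(P[i+1])-f_m(P[i-1]))/(f_m^{\max}-f_m^{\min})$,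 with $f_m^{\max},f_m^{\min}$ the max and min values of objective $m$. *)

theory Defs
  imports "HOL-Probability.Probability" "HOL-Library.List_Lexorder"
begin

(* Individuals: bitstrings of length n, represented as bool lists.
   Populations: finite sets of individuals.
   Bi-objective functions take values in real x real (both maximised). *)

type_synonym indiv = "bool list"
type_synonym pop = "bool list set"
type_synonym objf = "bool list \<Rightarrow> real \<times> real"

definition OneMinMax :: "nat \<Rightarrow> objf" where
  "OneMinMax n x = (real (count_list x True), real n - real (count_list x True))"

definition pareto_front_OMM :: "nat \<Rightarrow> (real \<times> real) set" where
  "pareto_front_OMM n = {(real i, real n - real i) | i. i \<le> n}"

definition dominates :: "objf \<Rightarrow> indiv \<Rightarrow> indiv \<Rightarrow> bool" where
  "dominates f y x \<longleftrightarrow> fst (f y) \<ge> fst (f x) \<and> snd (f y) \<ge> snd (f x)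
      \<and> (fst (f y) > fst (f x) \<or> snd (f y) > snd (f x))"

definition weakly_dominates :: "objf \<Rightarrow> indiv \<Rightarrow> indiv \<Rightarrow> bool" where
  "weakly_dominates f y x \<longleftrightarrow> fst (f y) \<ge> fst (f x) \<and> snd (f y) \<ge> snd (f x)"

definition update :: "objf \<Rightarrow> pop \<Rightarrow> indiv \<Rightarrow> pop" where
  "update f P s' = (if \<exists>z\<in>P. dominates f z s' then P
                    else insert s' {z\<in>P. \<not> weakly_dominates f s' z})"

(* position of x in a list (length of the list if absent) *)
fun pos_in :: "'a list \<Rightarrow> 'a \<Rightarrow> nat" where
  "pos_in [] x = 0"
| "pos_in (y # ys) x = (if y = x then 0 else Suc (pos_in ys x))"

(* population sorted ascending by objective component m (fst or snd);
   ties (which never occur in reachable populations) are broken lexicographically *)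
definition sorted_pop :: "objf \<Rightarrow> (real \<times> real \<Rightarrow> real) \<Rightarrow> pop \<Rightarrow> indiv list" where
  "sorted_pop f m P = sort_key (\<lambda>x. m (f x)) (sorted_list_of_set P)"

definition HVC :: "real \<times> real \<Rightarrow> objf \<Rightarrow> pop \<Rightarrow> indiv \<Rightarrow> ereal" where
  "HVC ref f P x =
    (let xs = sorted_pop f fst P; i = pos_in xs x; \<mu> = length xs;
         left = (if i = 0 then fst ref else fst (f (xs ! (i - 1))));
         right = (if i + 1 = \<mu> then snd ref else snd (f (xs ! (i + 1))))
     in ereal ((fst (f x) - left) * (snd (f x) - right)))"

definition CDC_obj :: "(real \<times> real \<Rightarrow> real) \<Rightarrow> objf \<Rightarrow> pop \<Rightarrow> indiv \<Rightarrow> ereal" where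
  "CDC_obj m f P x =
    (let xs = sorted_pop f m P; i = pos_in xs x; \<mu> = length xs
     in if i = 0 \<or> i + 1 = \<mu> then \<infinity>
        else ereal ((m (f (xs ! (i + 1))) - m (f (xs ! (i - 1))))
                    / (Max ((\<lambda>y. m (f y)) ` P) - Min ((\<lambda>y. m (f y)) ` P))))"

definition CDC :: "objf \<Rightarrow> pop \<Rightarrow> indiv \<Rightarrow> ereal" where
  "CDC f P x = CDC_obj fst f P x + CDC_obj snd f P x"

definition NMUAR :: "(pop \<Rightarrow> indiv \<Rightarrow> ereal) \<Rightarrow> pop \<Rightarrow> indiv pmf" where
  "NMUAR D P = (if \<exists>x\<in>P. \<exists>y\<in>P. D P x \<noteq> D P y
                then pmf_of_set {x\<in>P. D P x \<noteq> Min (D P ` P)}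
                else pmf_of_set P)"

fun flip_pmf :: "nat \<Rightarrow> nat \<Rightarrow> bool list pmf" where
  "flip_pmf n 0 = return_pmf []"
| "flip_pmf n (Suc k) = bind_pmf (bernoulli_pmf (1 / real n))
      (\<lambda>b. map_pmf (\<lambda>bs. b # bs) (flip_pmf n k))"

definition semo_mut :: "nat \<Rightarrow> indiv \<Rightarrow> indiv pmf" where
  "semo_mut n x = map_pmf (\<lambda>i. x[i := \<not> x ! i]) (pmf_of_set {..<n})"

definition gsemo_mut :: "nat \<Rightarrow> indiv \<Rightarrow> indiv pmf" where
  "gsemo_mut n x = map_pmf (\<lambda>bs. map2 (\<noteq>) x bs) (flip_pmf n n)"

definition semo_step :: "objf \<Rightarrow> (indiv \<Rightarrow> indiv pmf) \<Rightarrow> (pop \<Rightarrow> indiv \<Rightarrow> ereal)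
                          \<Rightarrow> pop \<Rightarrow> pop pmf" where
  "semo_step f mut D P = bind_pmf (NMUAR D P) (\<lambda>x. map_pmf (update f P) (mut x))"

fun trajectory :: "nat \<Rightarrow> (nat \<Rightarrow> indiv \<Rightarrow> indiv pmf) \<Rightarrow> (objf \<Rightarrow> pop \<Rightarrow> indiv \<Rightarrow> ereal)
                     \<Rightarrow> nat \<Rightarrow> pop list pmf" where
  "trajectory n mut D 0 = map_pmf (\<lambda>s. [{s}]) (pmf_of_set {xs. length xs = n})"
| "trajectory n mut D (Suc t) = bind_pmf (trajectory n mut D t)
      (\<lambda>ps. map_pmf (\<lambda>P'. ps @ [P'])
               (semo_step (OneMinMax n) (mut n) (D (OneMinMax n)) (last ps)))"

definition covers_front :: "nat \<Rightarrow> pop \<Rightarrow> bool" where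
  "covers_front n P \<longleftrightarrow> OneMinMax n ` P = pareto_front_OMM n"

(* expected number of iterations T until f(P_T) = F^*:  E[T] = sum_{t>=0} Pr[T > t] *)
definition expected_time :: "nat \<Rightarrow> (nat \<Rightarrow> indiv \<Rightarrow> indiv pmf)
                                \<Rightarrow> (objf \<Rightarrow> pop \<Rightarrow> indiv \<Rightarrow> ereal) \<Rightarrow> ennreal" where
  "expected_time n mut D =
     (\<Sum>t. ennreal (measure_pmf.prob (trajectory n mut D t)
                     {ps. \<forall>P\<in>set ps. \<not> covers_front n P}))"

end

theory Submission
  imports Defs
begin

(* Only the set S of counts of ones present in the population matters: on OneMinMax every
   string is Pareto optimal, so the population holds one string per count and S only grows.
   Call c \<in> S surrounded if c - 1 and c + 1 are in S as well. Surrounded points have the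
   smallest crowding distance, and hypervolume contribution 1, the least possible value, so
   NMUAR never picks them while other points exist. A parent with c ones reaches a new count
   by a single bit flip with probability at least w(c)/(9n), where w(c) counts the escaping
   flips; pairing the upper end of each block of S with the lower end of the next block shows
   that w averages at least (n + 1 - |S|)/8 over the non-surrounded points. If no point is
   surrounded, GSEMO escapes by flipping one or two bits with constant probability, and under
   SEMO, whose counts always form an interval, |S| \<le> 2. So with m counts missing a new one
   is found with probability at least m/(288n), and the potential 288 n H(m) drops by at
   least 1 per iteration in expectation, giving expected time at most 288 n H(n). *)


section \<open>Sets of counts\<close>

definition surrounded :: "nat set \<Rightarrow> nat \<Rightarrow> bool" where
  "surrounded S c \<longleftrightarrow> 0 < c \<and> c - 1 \<in> S \<and> c + 1 \<in> S"

(* For c \<in> S: the number of single-bit flips of a string of length n with c ones whose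
   result has a number of ones outside S. *)
definition escaping_flips :: "nat \<Rightarrow> nat set \<Rightarrow> nat \<Rightarrow> nat" where
  "escaping_flips n S c = (if c - 1 \<in> S then 0 else c) + (if c + 1 \<in> S then 0 else n - c)"

lemma escaping_flips_surrounded: "surrounded S c \<Longrightarrow> escaping_flips n S c = 0"
  by (simp add: surrounded_def escaping_flips_def)

definition prev_in :: "nat set \<Rightarrow> nat \<Rightarrow> nat" where
  "prev_in S c = Max {s\<in>S. s < c}"

definition next_in :: "nat set \<Rightarrow> nat \<Rightarrow> nat" where
  "next_in S c = Min {s\<in>S. c < s}"

lemma prev_in_greatest:
  assumes "finite S" "s \<in> S" "s < c"
  shows "prev_in S c \<in> S" "prev_in S c < c" "\<And>t. t \<in> S \<Longrightarrow> t < c \<Longrightarrow> t \<le> prev_in S c"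
proof -
  have "prev_in S c \<in> {s\<in>S. s < c}"
    unfolding prev_in_def using assms by (intro Max_in) auto
  then show "prev_in S c \<in> S" "prev_in S c < c"
    by auto
  show "\<And>t. t \<in> S \<Longrightarrow> t < c \<Longrightarrow> t \<le> prev_in S c"
    unfolding prev_in_def using assms(1) by (intro Max_ge) auto
qed

lemma next_in_least:
  assumes "finite S" "s \<in> S" "c < s"
  shows "next_in S c \<in> S" "c < next_in S c" "\<And>t. t \<in> S \<Longrightarrow> c < t \<Longrightarrow> next_in S c \<le> t"
proof -
  have "next_in S c \<in> {s\<in>S. c < s}"
    unfolding next_in_def using assms by (intro Min_in) auto
  then show "next_in S c \<in> S" "c < next_in S c"
    by auto
  show "\<And>t. t \<in> S \<Longrightarrow> c < t \<Longrightarrow> next_in S c \<le> t"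
    unfolding next_in_def using assms(1) by (intro Min_le) auto
qed

lemma prev_in_eqI: "finite S \<Longrightarrow> s \<in> S \<Longrightarrow> s < c \<Longrightarrow> (\<And>t. t \<in> S \<Longrightarrow> t < c \<Longrightarrow> t \<le> s) \<Longrightarrow> prev_in S c = s"
  unfolding prev_in_def by (intro Max_eqI) auto

lemma next_in_eqI: "finite S \<Longrightarrow> s \<in> S \<Longrightarrow> c < s \<Longrightarrow> (\<And>t. t \<in> S \<Longrightarrow> c < t \<Longrightarrow> s \<le> t) \<Longrightarrow> next_in S c = s"
  unfolding next_in_def by (intro Min_eqI) auto

lemma not_surrounded_Min:
  assumes "finite S"
  shows "\<not> surrounded S (Min S)"
proof
  assume "surrounded S (Min S)"
  then have "Min S - 1 \<in> S" "0 < Min S"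
    by (auto simp: surrounded_def)
  then show False
    using Min_le[OF assms, of "Min S - 1"] by linarith
qed

(* 0 is never a lower end, as 0 - 1 = 0; this matches its zero contribution to escaping_flips. *)
definition lower_ends :: "nat set \<Rightarrow> nat set" where
  "lower_ends S = {c\<in>S. c - 1 \<notin> S}"

definition upper_ends :: "nat set \<Rightarrow> nat set" where
  "upper_ends S = {c\<in>S. c + 1 \<notin> S}"

lemma sum_escaping_flips:
  assumes "finite S"
  shows "(\<Sum>c\<in>S. escaping_flips n S c) = (\<Sum>c\<in>lower_ends S. c) + (\<Sum>c\<in>upper_ends S. n - c)"
  using assms unfolding lower_ends_def upper_ends_def
  by (simp add: escaping_flips_def sum.distrib sum.inter_filter) (intro arg_cong2[where f = "(+)"] sum.cong, auto)

lemma Max_in_upper_ends: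
  assumes "finite S" "S \<noteq> {}"
  shows "Max S \<in> upper_ends S"
proof -
  have "Max S + 1 \<notin> S"
    using Max_ge[OF assms(1)] by fastforce
  then show ?thesis
    using Max_in[OF assms] by (simp add: upper_ends_def)
qed

lemma non_surrounded_subset:
  assumes "finite S"
  shows "{c\<in>S. \<not> surrounded S c} \<subseteq> insert (Min S) (lower_ends S \<union> upper_ends S)"
  using assms by (auto simp: surrounded_def lower_ends_def upper_ends_def dest: Min_le)

lemma non_surrounded_interval: "{c\<in>{a..b}. \<not> surrounded {a..b} c} \<subseteq> {a, b}"
  by (auto simp: surrounded_def)

lemma sum_escaping_flips_interval:
  assumes "a \<le> b" "b \<le> n"
  shows "(\<Sum>c\<in>{a..b}. escaping_flips n {a..b} c) = n + 1 - card {a..b}"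
proof -
  have "lower_ends {a..b} = (if a = 0 then {} else {a})"
    using assms(1) by (auto simp: lower_ends_def)
  moreover have "upper_ends {a..b} = {b}"
    using assms(1) by (auto simp: upper_ends_def)
  ultimately show ?thesis
    using assms sum_escaping_flips[of "{a..b}" n] by auto
qed

lemma interval_if_upper_ends_eq:
  fixes S :: "nat set"
  assumes "finite S" "S \<noteq> {}" "upper_ends S = {Max S}"
  shows "S = {Min S..Max S}"
proof -
  have "Min S + d \<in> S" if "Min S + d \<le> Max S" for d
    using that
  proof (induction d)
    case (Suc d)
    then have "Min S + d \<in> S" "Min S + d \<noteq> Max S"
      by auto
    then show ?case
      using assms(3) by (auto simp: upper_ends_def)
  qed (use assms in simp)
  then have "{Min S..Max S} \<subseteq> S"
    by (metis atLeastAtMost_iff le_add_diff_inverse subsetI)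
  then show ?thesis
    using assms(1,2) by auto
qed

(* The previous element of a lower end (other than the minimum) is an upper end. *)
lemma card_lower_ends_le:
  assumes "finite S"
  shows "card (lower_ends S - {Min S}) \<le> card (upper_ends S)"
proof (rule card_inj_on_le)
  let ?L = "lower_ends S - {Min S}"
  have below: "Min S \<in> S" "Min S < c" if "c \<in> ?L" for c
    using that assms by (auto intro: Min_in simp: lower_ends_def order.strict_iff_order)
  show "prev_in S ` ?L \<subseteq> upper_ends S"
  proof (rule image_subsetI)
    fix c assume c: "c \<in> ?L"
    note p = prev_in_greatest[OF assms below[OF c]]
    have "prev_in S c + 1 \<notin> S"
    proof
      assume "prev_in S c + 1 \<in> S"
      moreover have "c - 1 \<noteq> prev_in S c"
        using c p(1) by (auto simp: lower_ends_def)
      ultimately show False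
        using p(2) p(3)[of "prev_in S c + 1"] by linarith
    qed
    then show "prev_in S c \<in> upper_ends S"
      using p(1) by (simp add: upper_ends_def)
  qed
  show "inj_on (prev_in S) ?L"
  proof (rule linorder_inj_onI)
    fix c c' assume "c < c'" "c \<in> ?L" "c' \<in> ?L"
    then show "prev_in S c \<noteq> prev_in S c'"
      using prev_in_greatest[OF assms below[OF \<open>c \<in> ?L\<close>]] prev_in_greatest[OF assms below[OF \<open>c' \<in> ?L\<close>]]
      by (force simp: lower_ends_def)
  qed (auto simp: lower_ends_def)
qed (simp add: assms upper_ends_def)

(* The next element after an upper end (other than the maximum) is a lower end, and the two
   together contribute at least n escaping flips. *)
lemma sum_escaping_flips_ge_gaps:
  assumes "finite S" "S \<noteq> {}" "S \<subseteq> {..n}"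
  shows "(card (upper_ends S) - 1) * n \<le> (\<Sum>c\<in>S. escaping_flips n S c)"
proof -
  let ?G = "upper_ends S - {Max S}"
  have above: "Max S \<in> S" "c < Max S" if "c \<in> ?G" for c
    using that assms by (auto intro: Max_in simp: upper_ends_def order.strict_iff_order)
  have next_L: "next_in S ` ?G \<subseteq> lower_ends S"
  proof (rule image_subsetI)
    fix c assume c: "c \<in> ?G"
    note q = next_in_least[OF assms(1) above[OF c]]
    have "next_in S c - 1 \<notin> S"
    proof
      assume "next_in S c - 1 \<in> S"
      moreover have "c + 1 \<noteq> next_in S c"
        using c q(1) by (auto simp: upper_ends_def)
      ultimately show False
        using q(2) q(3)[of "next_in S c - 1"] by linarith
    qed
    then show "next_in S c \<in> lower_ends S"
      using q(1) by (simp add: lower_ends_def)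
  qed
  have "inj_on (next_in S) ?G"
  proof (rule linorder_inj_onI)
    fix c c' assume "c < c'" "c \<in> ?G" "c' \<in> ?G"
    then show "next_in S c \<noteq> next_in S c'"
      using next_in_least[OF assms(1) above[OF \<open>c \<in> ?G\<close>]] next_in_least[OF assms(1) above[OF \<open>c' \<in> ?G\<close>]]
      by (force simp: upper_ends_def)
  qed (auto simp: upper_ends_def)
  then have "(\<Sum>c\<in>?G. next_in S c) = (\<Sum>c\<in>next_in S ` ?G. c)"
    by (simp add: sum.reindex)
  also have "\<dots> \<le> (\<Sum>c\<in>lower_ends S. c)"
    using next_L assms(1) by (intro sum_mono2) (auto simp: lower_ends_def)
  finally have "(\<Sum>c\<in>?G. next_in S c) \<le> (\<Sum>c\<in>lower_ends S. c)" .
  moreover have "(\<Sum>c\<in>?G. n - c) \<le> (\<Sum>c\<in>upper_ends S. n - c)"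
    using assms(1) by (intro sum_mono2) (auto simp: upper_ends_def)
  moreover have "(\<Sum>c\<in>?G. n) \<le> (\<Sum>c\<in>?G. next_in S c + (n - c))"
    using next_in_least[OF assms(1) above] by (intro sum_mono) fastforce
  moreover have "card ?G = card (upper_ends S) - 1"
    using Max_in_upper_ends[OF assms(1,2)] assms(1) by (simp add: upper_ends_def)
  ultimately show ?thesis
    using sum_escaping_flips[OF assms(1), of n] by (simp add: sum.distrib)
qed

lemma card_non_surrounded_le:
  assumes "finite S"
  shows "card {c\<in>S. \<not> surrounded S c} \<le> 2 * card (upper_ends S) + 1"
proof -
  let ?L = "lower_ends S - {Min S}" and ?U = "upper_ends S"
  have "finite ?U" "finite ?L"
    using assms by (simp_all add: upper_ends_def lower_ends_def)
  have "{c\<in>S. \<not> surrounded S c} \<subseteq> insert (Min S) (?L \<union> ?U)"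
    using non_surrounded_subset[OF assms] by blast
  then have "card {c\<in>S. \<not> surrounded S c} \<le> card (insert (Min S) (?L \<union> ?U))"
    using \<open>finite ?U\<close> \<open>finite ?L\<close> by (intro card_mono) auto
  also have "\<dots> \<le> Suc (card (?L \<union> ?U))"
    using \<open>finite ?U\<close> \<open>finite ?L\<close> by (simp add: card_insert_if)
  also have "\<dots> \<le> Suc (card ?L + card ?U)"
    using card_Un_le by simp
  finally show ?thesis
    using card_lower_ends_le[OF assms] by simp
qed

lemma card_non_surrounded_le_escaping_flips:
  assumes "S \<subseteq> {..n}" "S \<noteq> {}"
  shows "card {c\<in>S. \<not> surrounded S c} * (n + 1 - card S) \<le> 8 * (\<Sum>c\<in>S. escaping_flips n S c)"
proof -
  let ?N = "{c\<in>S. \<not> surrounded S c}" and ?U = "upper_ends S"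
  let ?W = "\<Sum>c\<in>S. escaping_flips n S c"
  have fin: "finite S"
    using assms(1) finite_subset by blast
  have "finite ?U"
    using fin by (simp add: upper_ends_def)
  have card_N: "card ?N \<le> 2 * card ?U + 1"
    by (rule card_non_surrounded_le[OF fin])
  have "1 \<le> card ?U"
    using Max_in_upper_ends[OF fin assms(2)] \<open>finite ?U\<close> by (auto simp: Suc_le_eq card_gt_0_iff)
  moreover have "?U = {Max S}" if "card ?U = 1"
    using that Max_in_upper_ends[OF fin assms(2)] by (metis card_1_singletonE singletonD)
  ultimately consider (interval) "?U = {Max S}" | (gaps) "2 \<le> card ?U"
    by linarith
  then show ?thesis
  proof cases
    case interval
    then have S: "S = {Min S..Max S}"
      by (rule interval_if_upper_ends_eq[OF fin assms(2)])
    have "Min S \<le> Max S" "Max S \<le> n"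
      using fin assms by (auto intro: Min_le Max_in)
    then have W: "?W = n + 1 - card S"
      using sum_escaping_flips_interval by (metis S)
    have "card ?N \<le> card {Min S, Max S}"
      using non_surrounded_interval[of "Min S" "Max S"] by (intro card_mono) (auto simp flip: S)
    also have "\<dots> \<le> 2"
      by (simp add: card_insert_if)
    finally have "card ?N * (n + 1 - card S) \<le> 2 * ?W"
      unfolding W by (rule mult_le_mono1)
    then show ?thesis
      by simp
  next
    case gaps
    have "card ?N * (n + 1 - card S) \<le> (2 * card ?U + 1) * n"
      using card_N card_gt_0_iff[of S] fin assms(2) by (intro mult_le_mono) auto
    also have "\<dots> \<le> (8 * (card ?U - 1)) * n"
      using gaps by (intro mult_le_mono1) linarith
    also have "\<dots> \<le> 8 * ?W"
      using sum_escaping_flips_ge_gaps[OF fin assms(2,1)] by simp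
    finally show ?thesis .
  qed
qed

lemma ex_escaping_flips_pos:
  assumes "S \<subseteq> {..n}" "S \<noteq> {}" "card S \<le> n"
  shows "\<exists>c\<in>S. 0 < escaping_flips n S c"
proof (rule ccontr)
  assume "\<not> ?thesis"
  moreover have "finite S"
    using assms(1) finite_subset by blast
  ultimately have "(\<Sum>c\<in>S. escaping_flips n S c) = 0"
    by (auto intro: sum.neutral)
  moreover have "card {c\<in>S. \<not> surrounded S c} * (n + 1 - card S) \<le> 8 * (\<Sum>c\<in>S. escaping_flips n S c)"
    using assms(1,2) by (rule card_non_surrounded_le_escaping_flips)
  moreover have "Min S \<in> {c\<in>S. \<not> surrounded S c}"
    using \<open>finite S\<close> assms(2) not_surrounded_Min by auto
  then have "0 < card {c\<in>S. \<not> surrounded S c}"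
    using \<open>finite S\<close> by (auto simp: card_gt_0_iff)
  ultimately show False
    using assms(3) by simp
qed

lemma short_interval_if_not_surrounded:
  assumes "\<forall>c\<in>{a..b}. \<not> surrounded {a..b} c"
  shows "b \<le> a + 1"
proof (rule ccontr)
  assume "\<not> b \<le> a + 1"
  then have "a + 1 \<in> {a..b}" "surrounded {a..b} (a + 1)"
    by (auto simp: surrounded_def)
  then show False
    using assms by blast
qed

lemma mean_escaping_flips_short_interval:
  assumes "a \<le> b" "b \<le> a + 1" "b \<le> n"
  shows "real (n + 1 - card {a..b}) \<le> 2 * ((\<Sum>c\<in>{a..b}. real (escaping_flips n {a..b} c)) / card {a..b})"
proof -
  define k where "k = card {a..b}"
  have sum: "(\<Sum>c\<in>{a..b}. real (escaping_flips n {a..b} c)) = real (n + 1 - k)"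
    unfolding k_def using sum_escaping_flips_interval[OF assms(1,3)] by (simp flip: of_nat_sum)
  have "0 < k" "k \<le> 2"
    using assms(1,2) by (auto simp: k_def)
  then have "real (n + 1 - k) * k \<le> real (n + 1 - k) * 2"
    by (intro mult_left_mono) auto
  then show ?thesis
    unfolding k_def[symmetric] using \<open>0 < k\<close> by (simp add: sum le_divide_eq mult.commute)
qed

section \<open>Mutation\<close>

abbreviation ones :: "bool list \<Rightarrow> nat" where
  "ones x \<equiv> count_list x True"

definition positions :: "bool list \<Rightarrow> bool \<Rightarrow> nat set" where
  "positions x b = {i. i < length x \<and> x ! i = b}"

lemma finite_positions [simp]: "finite (positions x b)"
  by (simp add: positions_def)

lemma ones_eq_card_positions: "ones x = card (positions x True)"
  by (simp add: positions_def count_list_eq_length_filter length_filter_conv_card eq_commute)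

lemma card_positions: "card (positions x b) = (if b then ones x else length x - ones x)"
proof -
  have "positions x True \<union> positions x False = {..<length x}"
    and "positions x True \<inter> positions x False = {}"
    by (auto simp: positions_def)
  then have "card (positions x True) + card (positions x False) = length x"
    by (metis card_Un_disjoint card_lessThan finite_positions)
  then show ?thesis
    unfolding ones_eq_card_positions by (cases b) simp_all

qed

definition flip_mask :: "nat \<Rightarrow> nat set \<Rightarrow> bool list" where
  "flip_mask n T = map (\<lambda>i. i \<in> T) [0..<n]"

lemma length_flip_mask [simp]: "length (flip_mask n T) = n"
  by (simp add: flip_mask_def)

lemma nth_flip_mask [simp]: "i < n \<Longrightarrow> flip_mask n T ! i = (i \<in> T)"
  by (simp add: flip_mask_def)

lemma inj_on_flip_mask: "inj_on (flip_mask n) (Pow {..<n})"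
proof (rule inj_onI)
  fix T T' assume "T \<in> Pow {..<n}" "T' \<in> Pow {..<n}" "flip_mask n T = flip_mask n T'"
  then show "T = T'"
    by (metis PowD lessThan_iff nth_flip_mask subsetD subset_antisym subsetI)
qed

lemma ones_flip_positions:
  assumes "T \<subseteq> positions x b"
  shows "ones (map2 (\<noteq>) x (flip_mask (length x) T)) = (if b then ones x - card T else ones x + card T)"
proof -
  have "finite T"
    using assms finite_positions finite_subset by blast
  moreover have "positions (map2 (\<noteq>) x (flip_mask (length x) T)) True
      = (if b then positions x True - T else positions x True \<union> T)"
    using assms by (auto simp: positions_def)
  moreover have "if b then T \<subseteq> positions x True else positions x True \<inter> T = {}"
    using assms by (auto simp: positions_def)
  ultimately show ?thesis
    by (auto simp: ones_eq_card_positions card_Diff_subset card_Un_disjoint)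
qed

lemma flip_eq_map2_flip_mask: "i < length x \<Longrightarrow> x[i := \<not> x ! i] = map2 (\<noteq>) x (flip_mask (length x) {i})"
  by (rule nth_equalityI) (auto simp: nth_list_update)

lemma ones_flip:
  assumes "i \<in> positions x b"
  shows "ones (x[i := \<not> x ! i]) = (if b then ones x - 1 else ones x + 1)"
proof -
  have "i < length x"
    using assms by (simp add: positions_def)
  then show ?thesis
    unfolding flip_eq_map2_flip_mask[OF \<open>i < length x\<close>]
    using ones_flip_positions[of "{i}" x b] assms by simp
qed

lemma prob_semo_mut_ge:
  assumes "length x = n" "0 < n"
  shows "real (card (positions x b)) / real n
           \<le> measure_pmf.prob (semo_mut n x) {y. ones y = (if b then ones x - 1 else ones x + 1)}"
proof -
  let ?E = "{y. ones y = (if b then ones x - 1 else ones x + 1)}"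
  have "positions x b \<subseteq> {..<n} \<inter> (\<lambda>i. x[i := \<not> x ! i]) -` ?E"
  proof
    fix i assume "i \<in> positions x b"
    then show "i \<in> {..<n} \<inter> (\<lambda>i. x[i := \<not> x ! i]) -` ?E"
      using ones_flip[of i x b] assms(1) by (simp add: positions_def)
  qed
  then have "card (positions x b) \<le> card ({..<n} \<inter> (\<lambda>i. x[i := \<not> x ! i]) -` ?E)"
    by (intro card_mono) auto
  then show ?thesis
    using assms by (simp add: semo_mut_def measure_pmf_of_set lessThan_empty_iff divide_right_mono)
qed

lemma set_pmf_semo_mut:
  assumes "length x = n" "0 < n" "y \<in> set_pmf (semo_mut n x)"
  shows "length y = n \<and> (ones y = ones x + 1 \<or> ones y + 1 = ones x)"
proof -
  obtain i where i: "i < n" "y = x[i := \<not> x ! i]"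
    using assms by (auto simp: semo_mut_def lessThan_empty_iff)
  then have flip: "{i} \<subseteq> positions x (x ! i)"
    using assms(1) by (simp add: positions_def)
  then have "ones y = (if x ! i then ones x - 1 else ones x + 1)"
    using ones_flip[of i x "x ! i"] i by simp
  moreover have "x ! i \<Longrightarrow> 0 < ones x"
    using flip by (auto simp: ones_eq_card_positions card_gt_0_iff)
  ultimately show ?thesis
    using i assms(1) by auto
qed

lemma pmf_flip_pmf:
  assumes "1 \<le> n" "length bs = k"
  shows "pmf (flip_pmf n k) bs = (\<Prod>b\<leftarrow>bs. if b then 1 / real n else 1 - 1 / real n)"
  using assms(2)
proof (induction k arbitrary: bs)
  case (Suc k)
  then obtain b bs' where bs: "bs = b # bs'" "length bs' = k"
    by (cases bs) auto
  have Cons: "pmf (map_pmf ((#) c) (flip_pmf n k)) (b # bs') = (if c = b then pmf (flip_pmf n k) bs' else 0)" for c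
  proof (cases "c = b")
    case True
    then show ?thesis
      using pmf_map_inj'[of "(#) c" "flip_pmf n k" bs'] by (simp add: inj_def)
  qed (auto simp: pmf_eq_0_set_pmf)
  have "0 \<le> 1 / real n" "1 / real n \<le> 1"
    using assms(1) by auto
  then show ?case
    using Suc.IH[OF bs(2)] by (simp add: bs pmf_bind Cons mult.commute)
qed simp

lemma pmf_flip_pmf_flip_mask:
  assumes "1 \<le> n" "T \<subseteq> {..<n}"
  shows "pmf (flip_pmf n n) (flip_mask n T) = (1 / real n) ^ card T * (1 - 1 / real n) ^ (n - card T)"
proof -
  have "pmf (flip_pmf n n) (flip_mask n T) = (\<Prod>b\<leftarrow>flip_mask n T. if b then 1 / real n else 1 - 1 / real n)"
    using pmf_flip_pmf[OF assms(1), of "flip_mask n T" n] by simp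
  also have "\<dots> = (\<Prod>i<n. if i \<in> T then 1 / real n else 1 - 1 / real n)"
    unfolding flip_mask_def map_map
    by (subst prod.distinct_set_conv_list[symmetric]) (simp_all add: atLeast0LessThan o_def)
  also have "\<dots> = (\<Prod>i\<in>{..<n} \<inter> T. 1 / real n) * (\<Prod>i\<in>{..<n} - T. 1 - 1 / real n)"
    by (simp add: prod.If_cases Diff_eq)
  also have "{..<n} \<inter> T = T"
    using assms(2) by auto
  finally show ?thesis
    using assms(2) by (simp add: card_Diff_subset finite_subset)
qed

lemma set_pmf_gsemo_mut:
  assumes "length x = n" "y \<in> set_pmf (gsemo_mut n x)"
  shows "length y = n"
proof -
  have "length bs = k" if "bs \<in> set_pmf (flip_pmf n k)" for bs k
    using that by (induction k arbitrary: bs) auto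
  then show ?thesis
    using assms by (auto simp: gsemo_mut_def)
qed

lemma prob_gsemo_mut_ge:
  assumes "length x = n" "1 \<le> n"
  shows "real (card (positions x b) choose j) * ((1 / real n) ^ j * (1 - 1 / real n) ^ (n - j))
           \<le> measure_pmf.prob (gsemo_mut n x) {y. ones y = (if b then ones x - j else ones x + j)}"
proof -
  let ?U = "{T. T \<subseteq> positions x b \<and> card T = j}"
  have U: "?U \<subseteq> Pow {..<n}"
    using assms(1) by (auto simp: positions_def)
  then have "finite ?U"
    by (rule finite_subset) simp
  have "real (card (positions x b) choose j) * ((1 / real n) ^ j * (1 - 1 / real n) ^ (n - j))
      = (\<Sum>T\<in>?U. (1 / real n) ^ j * (1 - 1 / real n) ^ (n - j))"
    by (simp add: n_subsets)
  also have "\<dots> = (\<Sum>T\<in>?U. pmf (flip_pmf n n) (flip_mask n T))"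
    using U by (intro sum.cong refl) (auto simp: pmf_flip_pmf_flip_mask[OF assms(2)])
  also have "\<dots> = measure_pmf.prob (flip_pmf n n) (flip_mask n ` ?U)"
    using \<open>finite ?U\<close> inj_on_subset[OF inj_on_flip_mask U]
    by (simp add: measure_pmf.finite_measure_eq_sum_singleton measure_pmf_single sum.reindex)
  also have "\<dots> \<le> measure_pmf.prob (flip_pmf n n)
                   {bs. ones (map2 (\<noteq>) x bs) = (if b then ones x - j else ones x + j)}"
    using ones_flip_positions[of _ x b] assms(1) by (intro measure_pmf.finite_measure_mono) auto
  finally show ?thesis
    by (simp add: gsemo_mut_def vimage_def)
qed

lemma one_minus_inverse_pow_ge:
  assumes "2 \<le> n"
  shows "1 / 9 \<le> (1 - 1 / real n) ^ n"
proof -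
  have "- (1 / real n) - 2 * (1 / real n)\<^sup>2 \<le> ln (1 - 1 / real n)"
    using assms by (intro ln_one_minus_pos_lower_bound) (auto simp: field_simps)
  moreover have "2 * (1 / real n)\<^sup>2 \<le> 1 / real n"
    using assms by (simp add: field_simps power2_eq_square)
  ultimately have "- 2 / real n \<le> ln (1 - 1 / real n)"
    by simp
  then have "-2 \<le> real n * ln (1 - 1 / real n)"
    using assms by (simp add: field_simps)
  then have "exp (-2) \<le> exp (real n * ln (1 - 1 / real n))"
    by simp
  also have "\<dots> = (1 - 1 / real n) ^ n"
    using assms by (simp add: exp_of_nat_mult)
  finally have "exp (-2) \<le> (1 - 1 / real n) ^ n" .
  moreover have "exp (2::real) \<le> 3 * 3"
    using exp_add[of "1::real" 1] e_less_272 mult_mono[of "exp 1" 3 "exp 1" "3::real"] by simp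
  then have "1 / 9 \<le> exp (-2::real)"
    by (simp add: exp_minus field_simps)
  ultimately show ?thesis
    by linarith
qed

lemma flip_prob_ge:
  assumes "2 \<le> n" "j \<le> n"
  shows "1 / (9 * real n ^ j) \<le> (1 / real n) ^ j * (1 - 1 / real n) ^ (n - j)"
proof -
  have "(1 - 1 / real n) ^ n \<le> (1 - 1 / real n) ^ (n - j)"
    using assms by (intro power_decreasing) auto
  then have "(1 / real n) ^ j * (1 / 9) \<le> (1 / real n) ^ j * (1 - 1 / real n) ^ (n - j)"
    using one_minus_inverse_pow_ge[OF assms(1)] by (intro mult_left_mono) auto
  then show ?thesis
    by (simp add: power_one_over)
qed

lemma prob_mut_single_flip_ge:
  assumes "mut \<in> {semo_mut, gsemo_mut}" "length x = n" "2 \<le> n"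
  shows "real (card (positions x b)) / (9 * real n)
           \<le> measure_pmf.prob (mut n x) {y. ones y = (if b then ones x - 1 else ones x + 1)}"
proof (cases "mut = semo_mut")
  case True
  have "real (card (positions x b)) / (9 * real n) \<le> real (card (positions x b)) / real n"
    using assms(3) by (intro divide_left_mono) auto
  also have "\<dots> \<le> measure_pmf.prob (mut n x) {y. ones y = (if b then ones x - 1 else ones x + 1)}"
    using prob_semo_mut_ge[of x n b] assms True by simp
  finally show ?thesis .
next
  case False
  then have "mut = gsemo_mut"
    using assms(1) by simp
  have "real (card (positions x b)) / (9 * real n) = real (card (positions x b)) * (1 / (9 * real n ^ 1))"
    by simp
  also have "\<dots> \<le> real (card (positions x b) choose 1) * ((1 / real n) ^ 1 * (1 - 1 / real n) ^ (n - 1))"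
    unfolding choose_one using flip_prob_ge[of n 1] assms(3) by (intro mult_left_mono) auto
  also have "\<dots> \<le> measure_pmf.prob (mut n x) {y. ones y = (if b then ones x - 1 else ones x + 1)}"
    using prob_gsemo_mut_ge[of x n b 1] assms \<open>mut = gsemo_mut\<close> by simp
  finally show ?thesis .
qed

lemma prob_escape_ge:
  assumes "mut \<in> {semo_mut, gsemo_mut}" "length x = n" "2 \<le> n"
  shows "real (escaping_flips n S (ones x)) / (9 * real n) \<le> measure_pmf.prob (mut n x) {y. ones y \<notin> S}"
proof -
  let ?c = "ones x" and ?pr = "measure_pmf.prob (mut n x)"
  define down where "down = {y. ones y = ?c - 1 \<and> ?c - 1 \<notin> S}"
  define up where "up = {y. ones y = ?c + 1 \<and> ?c + 1 \<notin> S}"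
  have "real (if ?c - 1 \<in> S then 0 else ?c) / (9 * real n) \<le> ?pr down"
    using prob_mut_single_flip_ge[OF assms, of True] by (auto simp: card_positions down_def)
  moreover have "real (if ?c + 1 \<in> S then 0 else n - ?c) / (9 * real n) \<le> ?pr up"
    using prob_mut_single_flip_ge[OF assms, of False] assms(2) by (auto simp: card_positions up_def)
  moreover have "?pr down + ?pr up = ?pr (down \<union> up)"
    by (rule measure_pmf.finite_measure_Union[symmetric]) (auto simp: down_def up_def)
  moreover have "?pr (down \<union> up) \<le> ?pr {y. ones y \<notin> S}"
    by (intro measure_pmf.finite_measure_mono) (auto simp: down_def up_def)
  ultimately show ?thesis
    by (simp add: escaping_flips_def add_divide_distrib)
qed

lemma mean_prob_escape_ge:
  assumes "mut \<in> {semo_mut, gsemo_mut}" "2 \<le> n" "\<And>x. x \<in> A \<Longrightarrow> length x = n"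
  shows "(\<Sum>x\<in>A. real (escaping_flips n S (ones x))) / card A / (9 * real n)
           \<le> (\<Sum>x\<in>A. measure_pmf.prob (mut n x) {y. ones y \<notin> S}) / card A"
proof -
  have "(\<Sum>x\<in>A. real (escaping_flips n S (ones x)) / (9 * real n))
          \<le> (\<Sum>x\<in>A. measure_pmf.prob (mut n x) {y. ones y \<notin> S})"
    using assms by (intro sum_mono prob_escape_ge) auto
  then have "(\<Sum>x\<in>A. real (escaping_flips n S (ones x))) / (9 * real n) / card A
               \<le> (\<Sum>x\<in>A. measure_pmf.prob (mut n x) {y. ones y \<notin> S}) / card A"
    by (intro divide_right_mono) (simp_all add: sum_divide_distrib)
  then show ?thesis
    by (simp add: divide_divide_eq_left mult.commute)
qed

lemma choose_flip_prob_ge: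
  assumes "4 \<le> n" "n \<le> 2 * k" "j \<in> {1, 2}"
  shows "1 / 144 \<le> real (k choose j) * ((1 / real n) ^ j * (1 - 1 / real n) ^ (n - j))"
proof -
  have "real n ^ j / 16 \<le> real (k choose j)"
  proof (cases "j = 1")
    case False
    then have "j = 2"
      using assms(3) by simp
    have k: "2 \<le> real k" "real n \<le> 2 * real k"
      using assms by linarith+
    have "real n ^ 2 \<le> (2 * real k) ^ 2"
      using k by (intro power_mono) auto
    moreover have "2 * (real k * (real k - 1)) - real k * real k = real k * (real k - 2)"
      by (simp add: algebra_simps)
    moreover have "0 \<le> real k * (real k - 2)"
      using k by simp
    moreover have "real (k choose 2) = real k * (real k - 1) / 2"
      using k by (auto simp: choose_two field_char_0_class.of_nat_div mod_eq_0_iff_dvd of_nat_diff)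
    ultimately show ?thesis
      using \<open>j = 2\<close> by (simp add: power2_eq_square)
  qed (use assms in simp)
  moreover have "1 / (9 * real n ^ j) \<le> (1 / real n) ^ j * (1 - 1 / real n) ^ (n - j)"
    using assms by (intro flip_prob_ge) auto
  ultimately have "real n ^ j / 16 * (1 / (9 * real n ^ j))
                     \<le> real (k choose j) * ((1 / real n) ^ j * (1 - 1 / real n) ^ (n - j))"
    by (intro mult_mono) auto
  moreover have "real n ^ j / 16 * (1 / (9 * real n ^ j)) = 1 / 144"
    using assms by simp
  ultimately show ?thesis
    by simp
qed

lemma prob_gsemo_escape_ge:
  assumes "4 \<le> n" "length x = n" "ones x \<in> S" "\<forall>c\<in>S. \<not> surrounded S c"
  shows "1 / 144 \<le> measure_pmf.prob (gsemo_mut n x) {y. ones y \<notin> S}"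
proof -
  \<comment> \<open>flip bits of the majority value: there are at least n/2 of them\<close>
  define b where "b = (n < 2 * ones x)"
  let ?c = "ones x"
  let ?t = "\<lambda>j. if b then ?c - j else ?c + j"
  have half: "n \<le> 2 * card (positions x b)"
    using assms(2) by (auto simp: b_def card_positions)
  obtain j where j: "j \<in> {1, 2}" "?t j \<notin> S"
  proof -
    have "?t 1 \<notin> S \<or> ?t 2 \<notin> S"
    proof (cases b)
      case True
      then have "3 \<le> ?c"
        using assms(1) by (simp add: b_def)
      then show ?thesis
        using assms(3,4) True by (auto simp: surrounded_def numeral_2_eq_2)
    qed (use assms(3,4) in \<open>auto simp: surrounded_def\<close>)
    then show ?thesis
      using that by blast
  qed
  have "1 / 144 \<le> real (card (positions x b) choose j) * ((1 / real n) ^ j * (1 - 1 / real n) ^ (n - j))"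
    using assms(1) half j(1) by (rule choose_flip_prob_ge)
  also have "\<dots> \<le> measure_pmf.prob (gsemo_mut n x) {y. ones y = ?t j}"
    using assms by (intro prob_gsemo_mut_ge) auto
  also have "\<dots> \<le> measure_pmf.prob (gsemo_mut n x) {y. ones y \<notin> S}"
    using j by (intro measure_pmf.finite_measure_mono) auto
  finally show ?thesis .
qed

section \<open>Diversity measures on OneMinMax\<close>

lemma pos_in_nth: "x \<in> set xs \<Longrightarrow> pos_in xs x < length xs \<and> xs ! pos_in xs x = x"
  by (induction xs) auto

lemma sort_key_neighbours:
  fixes k :: "'a::linorder \<Rightarrow> 'b::linorder"
  assumes "finite P" "inj_on k P" "x \<in> P"
  defines "xs \<equiv> sort_key k (sorted_list_of_set P)"
  defines "i \<equiv> pos_in xs x"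
  shows "i = 0 \<longleftrightarrow> (\<forall>y\<in>P. k x \<le> k y)"
    and "i + 1 = length xs \<longleftrightarrow> (\<forall>y\<in>P. k y \<le> k x)"
    and "i \<noteq> 0 \<Longrightarrow> xs ! (i - 1) \<in> P \<and> k (xs ! (i - 1)) < k x \<and> (\<forall>y\<in>P. k y < k x \<longrightarrow> k y \<le> k (xs ! (i - 1)))"
    and "i + 1 \<noteq> length xs \<Longrightarrow> xs ! (i + 1) \<in> P \<and> k x < k (xs ! (i + 1)) \<and> (\<forall>y\<in>P. k x < k y \<longrightarrow> k (xs ! (i + 1)) \<le> k y)"
proof -
  have set_xs: "set xs = P" and "distinct xs"
    using assms(1) by (simp_all add: xs_def)
  then have "sorted_wrt (<) (map k xs)"
    using assms(2) by (simp add: strict_sorted_iff xs_def sorted_sort_key distinct_map)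
  then have less_iff: "k (xs ! j) < k (xs ! l) \<longleftrightarrow> j < l" if "j < length xs" "l < length xs" for j l
    using that by (metis less_asym linorder_neqE_nat sorted_wrt_iff_nth_less length_map nth_map)
  then have le_iff: "k (xs ! j) \<le> k (xs ! l) \<longleftrightarrow> j \<le> l" if "j < length xs" "l < length xs" for j l
    using that by (metis not_less)
  have i: "i < length xs" "xs ! i = x"
    using pos_in_nth[of x xs] set_xs assms(3) by (simp_all add: i_def)
  have P_nth: "(\<forall>y\<in>P. Q y) \<longleftrightarrow> (\<forall>j<length xs. Q (xs ! j))" for Q
    using set_xs by (auto simp: all_set_conv_all_nth[symmetric])
  have "(\<forall>y\<in>P. k x \<le> k y) \<longleftrightarrow> (\<forall>j<length xs. i \<le> j)"
    using i le_iff[of i] by (auto simp: P_nth)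
  then show "i = 0 \<longleftrightarrow> (\<forall>y\<in>P. k x \<le> k y)"
    using i(1) by presburger
  have "(\<forall>y\<in>P. k y \<le> k x) \<longleftrightarrow> (\<forall>j<length xs. j \<le> i)"
    using i le_iff[of _ i] by (auto simp: P_nth)
  moreover have "(\<forall>j<length xs. j \<le> i) \<longleftrightarrow> i + 1 = length xs"
    using i(1) by presburger
  ultimately show "i + 1 = length xs \<longleftrightarrow> (\<forall>y\<in>P. k y \<le> k x)"
    by blast
  show "i \<noteq> 0 \<Longrightarrow> xs ! (i - 1) \<in> P \<and> k (xs ! (i - 1)) < k x \<and> (\<forall>y\<in>P. k y < k x \<longrightarrow> k y \<le> k (xs ! (i - 1)))"
    using i less_iff[of _ i] le_iff[of _ "i - 1"] set_xs by (auto simp: P_nth)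
  show "i + 1 \<noteq> length xs \<Longrightarrow> xs ! (i + 1) \<in> P \<and> k x < k (xs ! (i + 1)) \<and> (\<forall>y\<in>P. k x < k y \<longrightarrow> k (xs ! (i + 1)) \<le> k y)"
    using i less_iff[of i] le_iff[of "i + 1"] set_xs by (auto simp: P_nth)
qed

lemma fst_OneMinMax [simp]: "fst (OneMinMax n x) = real (ones x)"
  by (simp add: OneMinMax_def)

lemma snd_OneMinMax [simp]: "snd (OneMinMax n x) = real n - real (ones x)"
  by (simp add: OneMinMax_def)

lemma sorted_pop_fst_neighbours:
  fixes n :: nat
  assumes "finite P" "inj_on ones P" "x \<in> P"
  defines "xs \<equiv> sorted_pop (OneMinMax n) fst P" and "S \<equiv> ones ` P" and "c \<equiv> ones x"
  shows "pos_in xs x = 0 \<longleftrightarrow> \<not> (\<exists>s\<in>S. s < c)"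
    and "pos_in xs x + 1 = length xs \<longleftrightarrow> \<not> (\<exists>s\<in>S. c < s)"
    and "pos_in xs x \<noteq> 0 \<Longrightarrow> ones (xs ! (pos_in xs x - 1)) = prev_in S c"
    and "pos_in xs x + 1 \<noteq> length xs \<Longrightarrow> ones (xs ! (pos_in xs x + 1)) = next_in S c"
proof -
  have "inj_on (\<lambda>y. fst (OneMinMax n y)) P"
    using assms(2) by (simp add: inj_on_def)
  note nb = sort_key_neighbours[OF assms(1) this assms(3), folded sorted_pop_def xs_def]
  have "finite S"
    using assms(1) by (simp add: S_def)
  show "pos_in xs x = 0 \<longleftrightarrow> \<not> (\<exists>s\<in>S. s < c)"
    using nb(1) by (auto simp: S_def c_def not_less)
  show "pos_in xs x + 1 = length xs \<longleftrightarrow> \<not> (\<exists>s\<in>S. c < s)"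
    using nb(2) by (auto simp: S_def c_def not_less)
  show "pos_in xs x \<noteq> 0 \<Longrightarrow> ones (xs ! (pos_in xs x - 1)) = prev_in S c"
    using nb(3) by (intro prev_in_eqI[symmetric] \<open>finite S\<close>) (auto simp: S_def c_def)
  show "pos_in xs x + 1 \<noteq> length xs \<Longrightarrow> ones (xs ! (pos_in xs x + 1)) = next_in S c"
    using nb(4) by (intro next_in_eqI[symmetric] \<open>finite S\<close>) (auto simp: S_def c_def)
qed

lemma sorted_pop_snd_neighbours:
  fixes n :: nat
  assumes "finite P" "inj_on ones P" "x \<in> P"
  defines "xs \<equiv> sorted_pop (OneMinMax n) snd P" and "S \<equiv> ones ` P" and "c \<equiv> ones x"
  shows "pos_in xs x = 0 \<longleftrightarrow> \<not> (\<exists>s\<in>S. c < s)"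
    and "pos_in xs x + 1 = length xs \<longleftrightarrow> \<not> (\<exists>s\<in>S. s < c)"
    and "pos_in xs x \<noteq> 0 \<Longrightarrow> ones (xs ! (pos_in xs x - 1)) = next_in S c"
    and "pos_in xs x + 1 \<noteq> length xs \<Longrightarrow> ones (xs ! (pos_in xs x + 1)) = prev_in S c"
proof -
  have "inj_on (\<lambda>y. snd (OneMinMax n y)) P"
    using assms(2) by (simp add: inj_on_def)
  note nb = sort_key_neighbours[OF assms(1) this assms(3), folded sorted_pop_def xs_def]
  have "finite S"
    using assms(1) by (simp add: S_def)
  show "pos_in xs x = 0 \<longleftrightarrow> \<not> (\<exists>s\<in>S. c < s)"
    using nb(1) by (auto simp: S_def c_def not_less)
  show "pos_in xs x + 1 = length xs \<longleftrightarrow> \<not> (\<exists>s\<in>S. s < c)"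
    using nb(2) by (auto simp: S_def c_def not_less)
  show "pos_in xs x \<noteq> 0 \<Longrightarrow> ones (xs ! (pos_in xs x - 1)) = next_in S c"
    using nb(3) by (intro next_in_eqI[symmetric] \<open>finite S\<close>) (auto simp: S_def c_def)
  show "pos_in xs x + 1 \<noteq> length xs \<Longrightarrow> ones (xs ! (pos_in xs x + 1)) = prev_in S c"
    using nb(4) by (intro prev_in_eqI[symmetric] \<open>finite S\<close>) (auto simp: S_def c_def)
qed

(* The sides of the box dominated only by the string with c ones; the reference point
   (-r, -r) acts as a neighbour with -r ones on the left and n + r ones on the right. *)
definition hv_width :: "real \<Rightarrow> nat set \<Rightarrow> nat \<Rightarrow> real" where
  "hv_width r S c = (if \<exists>s\<in>S. s < c then real c - real (prev_in S c) else real c + r)"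

definition hv_height :: "real \<Rightarrow> nat \<Rightarrow> nat set \<Rightarrow> nat \<Rightarrow> real" where
  "hv_height r n S c = (if \<exists>s\<in>S. c < s then real (next_in S c) - real c else real n - real c + r)"

lemma HVC_OneMinMax:
  assumes "finite P" "inj_on ones P" "x \<in> P"
  shows "HVC (-r, -r) (OneMinMax n) P x
           = ereal (hv_width r (ones ` P) (ones x) * hv_height r n (ones ` P) (ones x))"
  using sorted_pop_fst_neighbours[OF assms(1-3), of n]
  by (simp add: HVC_def Let_def hv_width_def hv_height_def)

lemma hv_width_ge_one:
  assumes "finite S" "c \<in> S" "1 \<le> r"
  shows "1 \<le> hv_width r S c" and "hv_width r S c = 1 \<Longrightarrow> c - 1 \<in> S"
proof -
  have "1 \<le> hv_width r S c \<and> (hv_width r S c = 1 \<longrightarrow> c - 1 \<in> S)"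
  proof (cases "\<exists>s\<in>S. s < c")
    case True
    then have p: "prev_in S c \<in> S" "prev_in S c < c"
      using prev_in_greatest[OF assms(1)] by auto
    with True have w: "hv_width r S c = real (c - prev_in S c)"
      by (simp add: hv_width_def of_nat_diff)
    have "c - 1 \<in> S" if "c - prev_in S c = 1"
      using that p by (metis diff_diff_cancel less_imp_le_nat)
    then show ?thesis
      using w p(2) by simp
  next
    case False
    then have w: "hv_width r S c = real c + r"
      by (simp add: hv_width_def)
    moreover have "c - 1 \<in> S" if "hv_width r S c = 1"
    proof -
      have "c = 0"
        using that w assms(3) of_nat_0_le_iff[of c] by linarith
      then show ?thesis
        using assms(2) by simp
    qed
    ultimately show ?thesis
      using assms(3) by auto
  qed
  then show "1 \<le> hv_width r S c" "hv_width r S c = 1 \<Longrightarrow> c - 1 \<in> S"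
    by auto
qed

lemma hv_height_ge_one:
  assumes "finite S" "c \<le> n" "1 \<le> r"
  shows "1 \<le> hv_height r n S c" and "hv_height r n S c = 1 \<Longrightarrow> c + 1 \<in> S \<or> c = n"
proof -
  have "1 \<le> hv_height r n S c \<and> (hv_height r n S c = 1 \<longrightarrow> c + 1 \<in> S \<or> c = n)"
  proof (cases "\<exists>s\<in>S. c < s")
    case True
    then have q: "next_in S c \<in> S" "c < next_in S c"
      using next_in_least[OF assms(1)] by auto
    with True have h: "hv_height r n S c = real (next_in S c - c)"
      by (simp add: hv_height_def of_nat_diff)
    have "c + 1 \<in> S" if "next_in S c - c = 1"
      using that q by (metis add_diff_inverse_nat less_imp_not_less add.commute)
    then show ?thesis
      using h q(2) by simp
  next
    case False
    then have h: "hv_height r n S c = real n - real c + r"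
      by (simp add: hv_height_def)
    have "real c \<le> real n"
      using assms(2) by simp
    then have "real c = real n" if "real n - real c + r = 1"
      using that assms(3) by linarith
    then show ?thesis
      using h assms(3) \<open>real c \<le> real n\<close> by auto
  qed
  then show "1 \<le> hv_height r n S c" "hv_height r n S c = 1 \<Longrightarrow> c + 1 \<in> S \<or> c = n"
    by auto
qed

lemma hv_width_height_surrounded:
  assumes "finite S" "surrounded S c"
  shows "hv_width r S c = 1" "hv_height r n S c = 1"
proof -
  have "prev_in S c = c - 1" "next_in S c = c + 1"
    using assms by (auto simp: surrounded_def intro: prev_in_eqI next_in_eqI)
  then show "hv_width r S c = 1" "hv_height r n S c = 1"
    using assms(2) by (auto simp: hv_width_def hv_height_def surrounded_def of_nat_diff)
qed

lemma CDC_obj_OneMinMax: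
  assumes "finite P" "inj_on ones P" "x \<in> P" "m \<in> {fst, snd}"
  defines "S \<equiv> ones ` P" and "c \<equiv> ones x"
  shows "CDC_obj m (OneMinMax n) P x =
    (if (\<exists>s\<in>S. s < c) \<and> (\<exists>s\<in>S. c < s)
     then ereal ((real (next_in S c) - real (prev_in S c)) / (real (Max S) - real (Min S)))
     else \<infinity>)"
proof -
  have "finite S" "S \<noteq> {}"
    using assms(1,3) by (auto simp: S_def)
  have "Max ((\<lambda>y. real (ones y)) ` P) = real (Max S)" "Min ((\<lambda>y. real (ones y)) ` P) = real (Min S)"
    using mono_Max_commute[of real S] mono_Min_commute[of real S] \<open>finite S\<close> \<open>S \<noteq> {}\<close>
    by (simp_all add: S_def image_image mono_def)
  moreover have img: "(\<lambda>y. real n - real (ones y)) ` P = (\<lambda>s. real n - real s) ` S"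
    by (auto simp: S_def)
  have "Max ((\<lambda>y. real n - real (ones y)) ` P) = real n - real (Min S)"
    unfolding img using \<open>finite S\<close> imageI[OF Min_in[OF \<open>finite S\<close> \<open>S \<noteq> {}\<close>]]
    by (intro Max_eqI) auto
  moreover have "Min ((\<lambda>y. real n - real (ones y)) ` P) = real n - real (Max S)"
    unfolding img using \<open>finite S\<close> imageI[OF Max_in[OF \<open>finite S\<close> \<open>S \<noteq> {}\<close>]]
    by (intro Min_eqI) auto
  ultimately show ?thesis
    using assms(4) sorted_pop_fst_neighbours[OF assms(1-3), of n] sorted_pop_snd_neighbours[OF assms(1-3), of n]
    by (elim insertE) (simp_all add: CDC_obj_def Let_def S_def c_def)
qed

lemma
  assumes "finite P" "inj_on ones P" "x \<in> P" "ones x \<le> n" "1 \<le> r"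
  shows HVC_OneMinMax_ge_one: "1 \<le> HVC (-r, -r) (OneMinMax n) P x"
    and HVC_OneMinMax_surrounded:
      "surrounded (ones ` P) (ones x) \<Longrightarrow> HVC (-r, -r) (OneMinMax n) P x = 1"
    and escaping_flips_eq_0_if_HVC_eq_one:
      "HVC (-r, -r) (OneMinMax n) P x = 1 \<Longrightarrow> escaping_flips n (ones ` P) (ones x) = 0"
proof -
  let ?w = "hv_width r (ones ` P) (ones x)" and ?h = "hv_height r n (ones ` P) (ones x)"
  have fin: "finite (ones ` P)"
    using assms(1) by simp
  have "ones x \<in> ones ` P"
    using assms(3) by simp
  note w = hv_width_ge_one[OF fin this assms(5)] and h = hv_height_ge_one[OF fin assms(4,5)]
  note HVC = HVC_OneMinMax[OF assms(1-3), of r n]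
  have "1 * 1 \<le> ?w * ?h"
    using w(1) h(1) by (intro mult_mono) auto
  then show "1 \<le> HVC (-r, -r) (OneMinMax n) P x"
    using HVC by simp
  show "HVC (-r, -r) (OneMinMax n) P x = 1" if "surrounded (ones ` P) (ones x)"
    using HVC hv_width_height_surrounded[OF fin that] by (simp add: one_ereal_def)
  show "escaping_flips n (ones ` P) (ones x) = 0" if "HVC (-r, -r) (OneMinMax n) P x = 1"
  proof -
    have "?w * ?h = 1"
      using HVC that by (simp add: one_ereal_def)
    moreover have "?w \<le> ?w * ?h" "?h \<le> ?w * ?h"
      using w(1) h(1) by (simp_all add: mult_le_cancel_left1 mult_le_cancel_right1)
    ultimately have "?w = 1" "?h = 1"
      using w(1) h(1) by linarith+
    then show ?thesis
      using w(2) h(2) by (auto simp: escaping_flips_def)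
  qed
qed

lemma HVC_OneMinMax_adjacent_pair:
  assumes "finite P" "inj_on ones P" "x \<in> P" "ones ` P = {a, a + 1}" "a + 1 \<le> n"
  shows "HVC (-r, -r) (OneMinMax n) P x = ereal (real (escaping_flips n (ones ` P) (ones x)) + r)"
proof -
  have "ones x = a \<or> ones x = a + 1"
    using assms(3,4) by blast
  then show ?thesis
  proof
    assume c: "ones x = a"
    have "next_in {a, a + 1} a = a + 1"
      by (intro next_in_eqI) auto
    moreover have "(if a - 1 \<in> {a, a + 1} then 0 else a) = a"
      by auto
    ultimately show ?thesis
      using HVC_OneMinMax[OF assms(1-3), of r n] assms(4) c
      by (simp add: escaping_flips_def hv_width_def hv_height_def)
  next
    assume c: "ones x = a + 1"
    have "prev_in {a, a + 1} (a + 1) = a"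
      by (intro prev_in_eqI) auto
    then show ?thesis
      using HVC_OneMinMax[OF assms(1-3), of r n] assms(4,5) c
      by (simp add: escaping_flips_def hv_width_def hv_height_def of_nat_diff)
  qed
qed

lemma CDC_OneMinMax:
  assumes "finite P" "inj_on ones P" "x \<in> P"
  defines "S \<equiv> ones ` P" and "c \<equiv> ones x"
  shows "CDC (OneMinMax n) P x =
    (if (\<exists>s\<in>S. s < c) \<and> (\<exists>s\<in>S. c < s)
     then ereal (2 * ((real (next_in S c) - real (prev_in S c)) / (real (Max S) - real (Min S))))
     else \<infinity>)"
  using CDC_obj_OneMinMax[OF assms(1-3), of fst n] CDC_obj_OneMinMax[OF assms(1-3), of snd n]
  by (simp add: CDC_def S_def c_def)

lemma CDC_OneMinMax_surrounded:
  assumes "finite P" "inj_on ones P" "x \<in> P" "surrounded (ones ` P) (ones x)"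
  shows "CDC (OneMinMax n) P x = ereal (4 / (real (Max (ones ` P)) - real (Min (ones ` P))))"
proof -
  let ?S = "ones ` P" and ?c = "ones x"
  have "finite ?S"
    using assms(1) by simp
  then have "prev_in ?S ?c = ?c - 1" "next_in ?S ?c = ?c + 1"
    using assms(4) by (auto simp: surrounded_def intro: prev_in_eqI next_in_eqI)
  then show ?thesis
    using assms(4) CDC_OneMinMax[OF assms(1-3), of n]
    by (force simp: surrounded_def of_nat_diff)
qed

lemma CDC_OneMinMax_gt:
  assumes "finite P" "inj_on ones P" "x \<in> P" "y \<in> P"
    and "surrounded (ones ` P) (ones y)" "\<not> surrounded (ones ` P) (ones x)"
  shows "ereal (4 / (real (Max (ones ` P)) - real (Min (ones ` P)))) < CDC (OneMinMax n) P x"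
proof (cases "(\<exists>s\<in>ones ` P. s < ones x) \<and> (\<exists>s\<in>ones ` P. ones x < s)")
  case True
  let ?S = "ones ` P" and ?c = "ones x"
  have fin: "finite ?S"
    using assms(1) by simp
  then have "Min ?S \<le> ones y - 1" "ones y + 1 \<le> Max ?S"
    using assms(5) by (auto simp: surrounded_def)
  then have width: "0 < real (Max ?S) - real (Min ?S)"
    by linarith
  obtain p q where p: "p \<in> ?S" "p < ?c" and q: "q \<in> ?S" "?c < q"
    using True by blast
  have "prev_in ?S ?c + 3 \<le> next_in ?S ?c"
  proof (rule ccontr)
    assume "\<not> ?thesis"
    then have "prev_in ?S ?c = ?c - 1" "next_in ?S ?c = ?c + 1"
      using prev_in_greatest[OF fin p] next_in_least[OF fin q] by linarith+
    then show False
      using assms(6) prev_in_greatest[OF fin p] next_in_least[OF fin q] by (auto simp: surrounded_def)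
  qed
  then have "real (prev_in ?S ?c) + 3 \<le> real (next_in ?S ?c)"
    by (metis of_nat_add of_nat_le_iff of_nat_numeral)
  then have "4 < 2 * (real (next_in ?S ?c) - real (prev_in ?S ?c))"
    by (simp add: right_diff_distrib)
  then have "4 / (real (Max ?S) - real (Min ?S))
               < 2 * (real (next_in ?S ?c) - real (prev_in ?S ?c)) / (real (Max ?S) - real (Min ?S))"
    using width by (rule divide_strict_right_mono)
  then show ?thesis
    using True CDC_OneMinMax[OF assms(1-3), of n] by simp
next
  case False
  then show ?thesis
    using CDC_OneMinMax[OF assms(1-3), of n] by auto
qed

definition cdc_or_hvc :: "(objf \<Rightarrow> pop \<Rightarrow> indiv \<Rightarrow> ereal) \<Rightarrow> bool" where
  "cdc_or_hvc D \<longleftrightarrow> D = CDC \<or> (\<exists>r\<ge>1. D = HVC (-r, -r))"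

section \<open>Non-minimum uniform at random selection\<close>

lemma NMUAR_eq_pmf_of_set:
  assumes "finite P" "P \<noteq> {}"
  obtains A where "NMUAR D P = pmf_of_set A" "A \<subseteq> P" "A \<noteq> {}"
proof (cases "\<exists>x\<in>P. \<exists>y\<in>P. D P x \<noteq> D P y")
  case True
  then obtain x y where "x \<in> P" "y \<in> P" "D P x \<noteq> D P y"
    by blast
  then have "D P x \<noteq> Min (D P ` P) \<or> D P y \<noteq> Min (D P ` P)"
    by argo
  then have "{x\<in>P. D P x \<noteq> Min (D P ` P)} \<noteq> {}"
    using \<open>x \<in> P\<close> \<open>y \<in> P\<close> by blast
  moreover have "NMUAR D P = pmf_of_set {x\<in>P. D P x \<noteq> Min (D P ` P)}"
    using True unfolding NMUAR_def by (rule if_P)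
  ultimately show ?thesis
    using that by blast
next
  case False
  then have "NMUAR D P = pmf_of_set P"
    unfolding NMUAR_def by (rule if_not_P)
  then show ?thesis
    using that assms(2) by blast
qed

lemma NMUAR_drop_min:
  assumes "finite P" "T \<subseteq> P" "T \<noteq> {}" "P - T \<noteq> {}"
    and "\<And>x. x \<in> T \<Longrightarrow> D P x = v" "\<And>x. x \<in> P - T \<Longrightarrow> v < D P x"
  shows "NMUAR D P = pmf_of_set (P - T)"
proof -
  obtain t u where tu: "t \<in> T" "u \<in> P - T"
    using assms(3,4) by blast
  have "Min (D P ` P) = v"
  proof (rule Min_eqI)
    show "v \<le> d" if "d \<in> D P ` P" for d
    proof -
      obtain x where "x \<in> P" "d = D P x"
        using \<open>d \<in> D P ` P\<close> by blast
      then show ?thesis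
        using assms(5)[of x] assms(6)[of x] by (cases "x \<in> T") auto
    qed
    show "v \<in> D P ` P"
      using tu(1) assms(2) assms(5)[OF tu(1)] by (intro image_eqI[where x = t]) auto
  qed (use assms(1) in simp)
  moreover have "{x\<in>P. D P x \<noteq> v} = P - T"
  proof (intro equalityI subsetI)
    show "x \<in> P - T" if "x \<in> {x\<in>P. D P x \<noteq> v}" for x
      using that assms(5) by auto
    show "x \<in> {x\<in>P. D P x \<noteq> v}" if "x \<in> P - T" for x
      using that assms(6)[OF that] by auto
  qed
  moreover have "D P t \<noteq> D P u"
    using assms(5)[OF tu(1)] assms(6)[OF tu(2)] by simp
  then have "\<exists>x\<in>P. \<exists>y\<in>P. D P x \<noteq> D P y"
    using tu assms(2) by blast
  ultimately show ?thesis
    by (simp add: NMUAR_def)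
qed

lemma mean_le_mean_upper:
  fixes h :: "'a \<Rightarrow> real"
  assumes "finite P" "A \<subseteq> P" "A \<noteq> {}" "\<And>t x. t \<in> P - A \<Longrightarrow> x \<in> A \<Longrightarrow> h t \<le> h x"
  shows "(\<Sum>x\<in>P. h x) / card P \<le> (\<Sum>x\<in>A. h x) / card A"
proof -
  have "finite A"
    by (rule finite_subset[OF assms(2,1)])
  have "h t * card A \<le> (\<Sum>x\<in>A. h x)" if "t \<in> P - A" for t
    using sum_mono[of A "\<lambda>_. h t" h] assms(4)[OF that] by (simp add: mult.commute)
  then have "(\<Sum>t\<in>P - A. h t * card A) \<le> (\<Sum>t\<in>P - A. \<Sum>x\<in>A. h x)"
    by (rule sum_mono)
  then have "(\<Sum>t\<in>P - A. h t) * card A \<le> card (P - A) * (\<Sum>x\<in>A. h x)"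
    by (simp add: sum_distrib_right)
  then have "(\<Sum>x\<in>P. h x) * card A \<le> (\<Sum>x\<in>A. h x) * card P"
    using assms(1,2) \<open>finite A\<close>
    by (simp add: sum.subset_diff[of A P] card_Diff_subset card_mono of_nat_diff algebra_simps)
  moreover have "0 < card A" "0 < card P"
    using assms(1-3) \<open>finite A\<close> by (auto simp: card_gt_0_iff)
  ultimately show ?thesis
    by (simp add: field_simps)
qed

lemma NMUAR_mean_ge:
  fixes h :: "indiv \<Rightarrow> real"
  assumes "finite P" "P \<noteq> {}" "\<And>x y. x \<in> P \<Longrightarrow> y \<in> P \<Longrightarrow> D P x < D P y \<Longrightarrow> h x \<le> h y"
  obtains A where "NMUAR D P = pmf_of_set A" "A \<subseteq> P" "A \<noteq> {}"
    "(\<Sum>x\<in>P. h x) / card P \<le> (\<Sum>x\<in>A. h x) / card A"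
proof (cases "\<exists>x\<in>P. \<exists>y\<in>P. D P x \<noteq> D P y")
  case False
  then have "NMUAR D P = pmf_of_set P"
    unfolding NMUAR_def by (rule if_not_P)
  then show ?thesis
    using that assms(2) by blast
next
  case True
  define A where "A = {x\<in>P. D P x \<noteq> Min (D P ` P)}"
  obtain x y where "x \<in> P" "y \<in> P" "D P x \<noteq> D P y"
    using True by blast
  then have "D P x \<noteq> Min (D P ` P) \<or> D P y \<noteq> Min (D P ` P)"
    by argo
  then have "A \<noteq> {}"
    using \<open>x \<in> P\<close> \<open>y \<in> P\<close> by (auto simp: A_def)
  have "A \<subseteq> P" "finite A"
    using assms(1) by (auto simp: A_def)
  have "h t \<le> h x" if "t \<in> P - A" "x \<in> A" for t x
    using that assms(1,3) by (auto simp: A_def order.strict_iff_order)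
  with assms(1) \<open>A \<subseteq> P\<close> \<open>A \<noteq> {}\<close> have "(\<Sum>x\<in>P. h x) / card P \<le> (\<Sum>x\<in>A. h x) / card A"
    by (rule mean_le_mean_upper)
  moreover have "NMUAR D P = pmf_of_set A"
    using True unfolding NMUAR_def A_def by (rule if_P)
  ultimately show ?thesis
    using that \<open>A \<subseteq> P\<close> \<open>A \<noteq> {}\<close> by blast
qed

lemma nn_integral_pmf_of_set_ge:
  assumes "finite A" "A \<noteq> {}" "\<And>x. x \<in> A \<Longrightarrow> 0 \<le> g x" "\<beta> \<le> (\<Sum>x\<in>A. g x) / card A"
  shows "ennreal \<beta> \<le> (\<integral>\<^sup>+x. ennreal (g x) \<partial>measure_pmf (pmf_of_set A))"
proof -
  have "(\<integral>\<^sup>+x. ennreal (g x) \<partial>measure_pmf (pmf_of_set A)) = (\<Sum>x\<in>A. ennreal (g x)) / of_nat (card A)"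
    using assms(1,2) by (simp add: nn_integral_pmf_of_set)
  also have "\<dots> = ennreal ((\<Sum>x\<in>A. g x) / card A)"
    using assms(1-3) by (simp add: sum_ennreal ennreal_of_nat_eq_real_of_nat divide_ennreal card_gt_0_iff sum_nonneg)
  finally show ?thesis
    using assms(4) by (simp add: ennreal_leI)
qed

lemma mean_escaping_flips_ge_if_surrounded:
  assumes "finite P" "inj_on ones P" "ones ` P \<subseteq> {..n}"
    and "A \<subseteq> {x\<in>P. \<not> surrounded (ones ` P) (ones x)}" "A \<noteq> {}"
    and "{x\<in>P. 0 < escaping_flips n (ones ` P) (ones x)} \<subseteq> A"
  shows "real (n + 1 - card (ones ` P)) / 8 \<le> (\<Sum>x\<in>A. real (escaping_flips n (ones ` P) (ones x))) / card A"
proof -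
  let ?S = "ones ` P"
  let ?N = "{c\<in>?S. \<not> surrounded ?S c}"
  let ?W = "\<Sum>c\<in>?S. escaping_flips n ?S c"
  have "finite A"
    by (rule finite_subset[OF assms(4)]) (use assms(1) in simp)
  have "(\<Sum>x\<in>A. escaping_flips n ?S (ones x)) = (\<Sum>x\<in>P. escaping_flips n ?S (ones x))"
    using assms(1,4,6) by (intro sum.mono_neutral_left) auto
  also have "\<dots> = ?W"
    using assms(2) by (simp add: sum.reindex)
  finally have sum_A: "(\<Sum>x\<in>A. real (escaping_flips n ?S (ones x))) = real ?W"
    by (simp flip: of_nat_sum)
  have "card A \<le> card ?N"
    using assms(4) \<open>finite A\<close> assms(1) inj_on_subset[OF assms(2)]
    by (intro card_inj_on_le[of ones]) auto
  moreover have "card ?N * (n + 1 - card ?S) \<le> 8 * ?W"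
    using assms(3,5,4) by (intro card_non_surrounded_le_escaping_flips) auto
  ultimately have "card A * (n + 1 - card ?S) \<le> 8 * ?W"
    using mult_le_mono1 order_trans by blast
  then have "real (card A * (n + 1 - card ?S)) \<le> real (8 * ?W)"
    by (simp only: of_nat_le_iff)
  moreover have "0 < card A"
    using assms(5) \<open>finite A\<close> by (simp add: card_gt_0_iff)
  ultimately show ?thesis
    by (simp add: sum_A field_simps)
qed

lemma ex_not_surrounded:
  assumes "finite P" "y \<in> P"
  obtains z where "z \<in> P" "\<not> surrounded (ones ` P) (ones z)"
proof -
  have "finite (ones ` P)" "ones ` P \<noteq> {}"
    using assms by auto
  then have "Min (ones ` P) \<in> ones ` P"
    by (rule Min_in)
  then obtain z where "Min (ones ` P) = ones z" "z \<in> P"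
    by (rule imageE)
  then show ?thesis
    using that not_surrounded_Min[OF \<open>finite (ones ` P)\<close>] by simp
qed

lemma NMUAR_CDC_if_surrounded:
  assumes "finite P" "inj_on ones P" "y \<in> P" "surrounded (ones ` P) (ones y)"
  shows "NMUAR (CDC (OneMinMax n)) P = pmf_of_set {x\<in>P. \<not> surrounded (ones ` P) (ones x)}"
proof -
  let ?S = "ones ` P"
  let ?T = "{x\<in>P. surrounded ?S (ones x)}"
  obtain z where z: "z \<in> P" "\<not> surrounded ?S (ones z)"
    by (rule ex_not_surrounded[OF assms(1,3)])
  have "NMUAR (CDC (OneMinMax n)) P = pmf_of_set (P - ?T)"
  proof (rule NMUAR_drop_min)
    show "CDC (OneMinMax n) P x = ereal (4 / (real (Max ?S) - real (Min ?S)))" if "x \<in> ?T" for x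
      using that assms(1,2) by (intro CDC_OneMinMax_surrounded) auto
    show "ereal (4 / (real (Max ?S) - real (Min ?S))) < CDC (OneMinMax n) P x" if "x \<in> P - ?T" for x
      using that assms by (intro CDC_OneMinMax_gt) auto
  qed (use assms z in auto)
  moreover have "P - ?T = {x\<in>P. \<not> surrounded ?S (ones x)}"
    by auto
  ultimately show ?thesis
    by simp
qed

lemma NMUAR_HVC_if_surrounded:
  assumes "finite P" "inj_on ones P" "ones ` P \<subseteq> {..n}" "1 \<le> r"
    and "y \<in> P" "surrounded (ones ` P) (ones y)" "u \<in> P" "0 < escaping_flips n (ones ` P) (ones u)"
  shows "NMUAR (HVC (-r, -r) (OneMinMax n)) P = pmf_of_set {x\<in>P. HVC (-r, -r) (OneMinMax n) P x \<noteq> 1}"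
proof -
  let ?T = "{x\<in>P. HVC (-r, -r) (OneMinMax n) P x = 1}"
  have len: "ones x \<le> n" if "x \<in> P" for x
    using that assms(3) by auto
  have "NMUAR (HVC (-r, -r) (OneMinMax n)) P = pmf_of_set (P - ?T)"
  proof (rule NMUAR_drop_min)
    show "1 < HVC (-r, -r) (OneMinMax n) P x" if "x \<in> P - ?T" for x
      using that HVC_OneMinMax_ge_one[OF assms(1,2) _ len assms(4), of x] by auto
    show "P - ?T \<noteq> {}"
      using assms(7,8) escaping_flips_eq_0_if_HVC_eq_one[OF assms(1,2,7) len[OF assms(7)] assms(4)] by auto
    show "?T \<noteq> {}"
      using HVC_OneMinMax_surrounded[OF assms(1,2,5) len[OF assms(5)] assms(4,6)] assms(5) by auto
  qed (use assms(1) in auto)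
  moreover have "P - ?T = {x\<in>P. HVC (-r, -r) (OneMinMax n) P x \<noteq> 1}"
    by auto
  ultimately show ?thesis
    by simp
qed

lemma NMUAR_if_surrounded:
  assumes "finite P" "inj_on ones P" "ones ` P \<subseteq> {..n}" "card (ones ` P) \<le> n" "cdc_or_hvc D"
    and "y \<in> P" "surrounded (ones ` P) (ones y)"
  obtains A where "NMUAR (D (OneMinMax n)) P = pmf_of_set A" "A \<noteq> {}"
    "A \<subseteq> {x\<in>P. \<not> surrounded (ones ` P) (ones x)}"
    "{x\<in>P. 0 < escaping_flips n (ones ` P) (ones x)} \<subseteq> A"
proof -
  have len: "ones x \<le> n" if "x \<in> P" for x
    using that assms(3) by auto
  consider "D = CDC" | r where "1 \<le> r" "D = HVC (-r, -r)"
    using assms(5) unfolding cdc_or_hvc_def by blast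
  then show ?thesis
  proof cases
    case 1
    obtain z where "z \<in> P" "\<not> surrounded (ones ` P) (ones z)"
      by (rule ex_not_surrounded[OF assms(1,6)])
    then show ?thesis
      using that NMUAR_CDC_if_surrounded[OF assms(1,2,6,7)] escaping_flips_surrounded 1
      by fastforce
  next
    case (2 r)
    obtain u where u: "u \<in> P" "0 < escaping_flips n (ones ` P) (ones u)"
      using ex_escaping_flips_pos[OF assms(3) _ assms(4)] assms(6) by blast
    have "{x\<in>P. HVC (-r, -r) (OneMinMax n) P x \<noteq> 1} \<subseteq> {x\<in>P. \<not> surrounded (ones ` P) (ones x)}"
      using HVC_OneMinMax_surrounded[OF assms(1,2) _ len 2(1)] by auto
    moreover have "{x\<in>P. 0 < escaping_flips n (ones ` P) (ones x)} \<subseteq> {x\<in>P. HVC (-r, -r) (OneMinMax n) P x \<noteq> 1}"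
      using escaping_flips_eq_0_if_HVC_eq_one[OF assms(1,2) _ len 2(1)] by fastforce
    ultimately show ?thesis
      using that NMUAR_HVC_if_surrounded[OF assms(1-3) 2(1) assms(6,7) u] u 2(2) by blast
  qed
qed

lemma CDC_OneMinMax_short_interval:
  assumes "finite P" "inj_on ones P" "x \<in> P" "ones ` P = {a..b}" "b \<le> a + 1"
  shows "CDC (OneMinMax n) P x = \<infinity>"
proof -
  have "ones x \<in> {a..b}"
    using assms(3,4) by blast
  then have "\<not> ((\<exists>s\<in>ones ` P. s < ones x) \<and> (\<exists>s\<in>ones ` P. ones x < s))"
    using assms(4,5) by auto
  then show ?thesis
    using CDC_OneMinMax[OF assms(1-3), of n] by simp
qed

lemma escaping_flips_mono_short_interval:
  assumes "finite P" "inj_on ones P" "ones ` P = {a..b}" "b \<le> a + 1" "b \<le> n" "cdc_or_hvc D"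
    and "x \<in> P" "y \<in> P" "D (OneMinMax n) P x < D (OneMinMax n) P y"
  shows "escaping_flips n (ones ` P) (ones x) \<le> escaping_flips n (ones ` P) (ones y)"
proof -
  consider "D = CDC" | r where "D = HVC (-r, -r)"
    using assms(6) unfolding cdc_or_hvc_def by blast
  then show ?thesis
  proof cases
    case 1
    then show ?thesis
      using assms(7-9) CDC_OneMinMax_short_interval[OF assms(1,2) _ assms(3,4)] by simp
  next
    case (2 r)
    show ?thesis
    proof (cases "b = a + 1")
      case True
      then have "ones ` P = {a, a + 1}"
        using assms(3) by auto
      then show ?thesis
        using assms(5,7-9) True 2 HVC_OneMinMax_adjacent_pair[OF assms(1,2)] by auto
    next
      case False
      have "ones x \<in> {a..b}" "ones y \<in> {a..b}"
        using assms(3,7,8) by blast+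
      then have "x = y"
        using False assms(4) inj_onD[OF assms(2) _ assms(7,8)] by simp
      then show ?thesis
        using assms(9) by simp
    qed
  qed
qed

section \<open>Populations\<close>

(* The interval condition is invariant under SEMO, whose offspring differ from their parent by
   exactly one in the number of ones. *)
definition valid_pop :: "nat \<Rightarrow> (nat \<Rightarrow> indiv \<Rightarrow> indiv pmf) \<Rightarrow> pop \<Rightarrow> bool" where
  "valid_pop n mut P \<longleftrightarrow> finite P \<and> P \<noteq> {} \<and> (\<forall>x\<in>P. length x = n) \<and> inj_on ones P
     \<and> (mut = semo_mut \<longrightarrow> (\<exists>a b. ones ` P = {a..b}))"

lemma valid_popD:
  assumes "valid_pop n mut P"
  shows "finite P" "P \<noteq> {}" "\<And>x. x \<in> P \<Longrightarrow> length x = n" "inj_on ones P" "ones ` P \<subseteq> {..n}"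
  using assms count_le_length[of _ True] by (auto simp: valid_pop_def)

lemma update_OneMinMax: "update (OneMinMax n) P s = insert s {z\<in>P. ones z \<noteq> ones s}"
  by (auto simp: update_def dominates_def weakly_dominates_def)

lemma ones_update_OneMinMax: "ones ` update (OneMinMax n) P s = insert (ones s) (ones ` P)"
  by (auto simp: update_OneMinMax)

lemma covers_front_iff:
  assumes "\<And>x. x \<in> P \<Longrightarrow> length x = n"
  shows "covers_front n P \<longleftrightarrow> ones ` P = {..n}"
proof -
  have "inj (\<lambda>c::nat. (real c, real n - real c))"
    by (auto simp: inj_def)
  moreover have "OneMinMax n ` P = (\<lambda>c. (real c, real n - real c)) ` ones ` P"
    by (auto simp: OneMinMax_def image_image)
  moreover have "pareto_front_OMM n = (\<lambda>c. (real c, real n - real c)) ` {..n}"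
    by (auto simp: pareto_front_OMM_def)
  ultimately show ?thesis
    unfolding covers_front_def by (simp add: inj_image_eq_iff)
qed

lemma set_pmf_NMUAR:
  assumes "finite P" "P \<noteq> {}"
  shows "set_pmf (NMUAR D P) \<subseteq> P"
proof -
  obtain A where A: "NMUAR D P = pmf_of_set A" "A \<subseteq> P" "A \<noteq> {}"
    by (rule NMUAR_eq_pmf_of_set[OF assms])
  moreover have "finite A"
    by (rule finite_subset[OF A(2) assms(1)])
  ultimately show ?thesis
    by simp
qed

lemma set_pmf_semo_step:
  assumes "finite P" "P \<noteq> {}" "P' \<in> set_pmf (semo_step f M Dv P)"
  obtains x s where "x \<in> P" "s \<in> set_pmf (M x)" "P' = update f P s"
  using assms(3) set_pmf_NMUAR[OF assms(1,2)] that by (auto simp: semo_step_def)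

lemma valid_pop_semo_step:
  assumes "valid_pop n mut P" "mut \<in> {semo_mut, gsemo_mut}" "0 < n"
    and "P' \<in> set_pmf (semo_step (OneMinMax n) (mut n) Dv P)"
  shows "valid_pop n mut P'"
proof -
  note P = valid_popD[OF assms(1)]
  obtain x s where x: "x \<in> P" and s: "s \<in> set_pmf (mut n x)" and P': "P' = update (OneMinMax n) P s"
    by (rule set_pmf_semo_step[OF P(1,2) assms(4)])
  have "length s = n"
  proof (cases "mut = semo_mut")
    case True
    then show ?thesis
      using set_pmf_semo_mut[OF P(3)[OF x] assms(3)] s by simp
  next
    case False
    then have "mut = gsemo_mut"
      using assms(2) by simp
    then show ?thesis
      using set_pmf_gsemo_mut[OF P(3)[OF x]] s by simp
  qed
  then have "finite P' \<and> P' \<noteq> {} \<and> (\<forall>y\<in>P'. length y = n) \<and> inj_on ones P'"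
    using P(1,3,4) by (auto simp: P' update_OneMinMax inj_on_def)
  moreover have "\<exists>a b. ones ` P' = {a..b}" if semo: "mut = semo_mut"
  proof -
    obtain a b where ab: "ones ` P = {a..b}"
      using assms(1) semo by (auto simp: valid_pop_def)
    have "ones s = ones x + 1 \<or> ones s + 1 = ones x" "ones x \<in> {a..b}"
      using set_pmf_semo_mut[OF P(3)[OF x] assms(3)] s semo x ab by auto
    then have "insert (ones s) {a..b} = {min a (ones s)..max b (ones s)}"
      by auto
    then show ?thesis
      by (auto simp: P' ones_update_OneMinMax ab)
  qed
  ultimately show ?thesis
    by (simp add: valid_pop_def)
qed

lemma NMUAR_escape_mean_ge_surrounded:
  assumes "valid_pop n mut P" "mut \<in> {semo_mut, gsemo_mut}" "cdc_or_hvc D" "4 \<le> n" "card (ones ` P) \<le> n"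
    and "y \<in> P" "surrounded (ones ` P) (ones y)"
  obtains A where "NMUAR (D (OneMinMax n)) P = pmf_of_set A" "A \<subseteq> P" "A \<noteq> {}"
    "real (n + 1 - card (ones ` P)) / (72 * real n)
       \<le> (\<Sum>x\<in>A. measure_pmf.prob (mut n x) {z. ones z \<notin> ones ` P}) / card A"
proof -
  note P = valid_popD[OF assms(1)]
  obtain A where A: "NMUAR (D (OneMinMax n)) P = pmf_of_set A" "A \<noteq> {}"
    "A \<subseteq> {x\<in>P. \<not> surrounded (ones ` P) (ones x)}"
    "{x\<in>P. 0 < escaping_flips n (ones ` P) (ones x)} \<subseteq> A"
    by (rule NMUAR_if_surrounded[OF P(1,4,5) assms(5,3,6,7)])
  have "real (n + 1 - card (ones ` P)) / (72 * real n)
          = real (n + 1 - card (ones ` P)) / 8 / (9 * real n)"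
    by simp
  also have "\<dots> \<le> (\<Sum>x\<in>A. real (escaping_flips n (ones ` P) (ones x))) / card A / (9 * real n)"
    using mean_escaping_flips_ge_if_surrounded[OF P(1,4,5) A(3,2,4)] by (rule divide_right_mono) simp
  also have "\<dots> \<le> (\<Sum>x\<in>A. measure_pmf.prob (mut n x) {z. ones z \<notin> ones ` P}) / card A"
    using A(3) assms(2,4) P(3) by (intro mean_prob_escape_ge) auto
  finally have "real (n + 1 - card (ones ` P)) / (72 * real n)
                  \<le> (\<Sum>x\<in>A. measure_pmf.prob (mut n x) {z. ones z \<notin> ones ` P}) / card A" .
  with A that show ?thesis
    by blast
qed

lemma NMUAR_escape_mean_ge_gsemo:
  assumes "valid_pop n gsemo_mut P" "4 \<le> n" "\<forall>c\<in>ones ` P. \<not> surrounded (ones ` P) c"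
  obtains A where "NMUAR (D (OneMinMax n)) P = pmf_of_set A" "A \<subseteq> P" "A \<noteq> {}"
    "1 / 144 \<le> (\<Sum>x\<in>A. measure_pmf.prob (gsemo_mut n x) {z. ones z \<notin> ones ` P}) / card A"
proof -
  note P = valid_popD[OF assms(1)]
  obtain A where A: "NMUAR (D (OneMinMax n)) P = pmf_of_set A" "A \<subseteq> P" "A \<noteq> {}"
    by (rule NMUAR_eq_pmf_of_set[OF P(1,2)])
  have "finite A"
    by (rule finite_subset[OF A(2) P(1)])
  have "(\<Sum>x\<in>A. 1 / 144) \<le> (\<Sum>x\<in>A. measure_pmf.prob (gsemo_mut n x) {z. ones z \<notin> ones ` P})"
    using A(2) P(3) assms(2,3) by (intro sum_mono prob_gsemo_escape_ge) auto
  then have "1 / 144 \<le> (\<Sum>x\<in>A. measure_pmf.prob (gsemo_mut n x) {z. ones z \<notin> ones ` P}) / card A"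
    using A(3) \<open>finite A\<close> by (simp add: field_simps card_gt_0_iff)
  with A that show ?thesis
    by blast
qed

lemma NMUAR_escape_mean_ge_semo:
  assumes "valid_pop n semo_mut P" "cdc_or_hvc D" "4 \<le> n" "\<forall>c\<in>ones ` P. \<not> surrounded (ones ` P) c"
  obtains A where "NMUAR (D (OneMinMax n)) P = pmf_of_set A" "A \<subseteq> P" "A \<noteq> {}"
    "real (n + 1 - card (ones ` P)) / (18 * real n)
       \<le> (\<Sum>x\<in>A. measure_pmf.prob (semo_mut n x) {z. ones z \<notin> ones ` P}) / card A"
proof -
  note P = valid_popD[OF assms(1)]
  let ?S = "ones ` P"
  let ?h = "\<lambda>x. real (escaping_flips n ?S (ones x))"
  obtain a b where S: "?S = {a..b}"
    using assms(1) by (auto simp: valid_pop_def)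
  then have "a \<le> b" "b \<le> a + 1" "b \<le> n"
    using P(2,5) assms(4) short_interval_if_not_surrounded[of a b] by auto
  then have mono: "?h x \<le> ?h y"
    if "x \<in> P" "y \<in> P" "D (OneMinMax n) P x < D (OneMinMax n) P y" for x y
    using escaping_flips_mono_short_interval[OF P(1,4) S _ _ assms(2) that] by simp
  obtain A where A: "NMUAR (D (OneMinMax n)) P = pmf_of_set A" "A \<subseteq> P" "A \<noteq> {}"
    "(\<Sum>x\<in>P. ?h x) / card P \<le> (\<Sum>x\<in>A. ?h x) / card A"
    by (rule NMUAR_mean_ge[OF P(1,2) mono])
  have "real (n + 1 - card ?S) \<le> 2 * ((\<Sum>c\<in>?S. real (escaping_flips n ?S c)) / card ?S)"
    unfolding S using mean_escaping_flips_short_interval[OF \<open>a \<le> b\<close> \<open>b \<le> a + 1\<close> \<open>b \<le> n\<close>] .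
  also have "\<dots> = 2 * ((\<Sum>x\<in>P. ?h x) / card P)"
    using P(4) by (simp add: sum.reindex card_image)
  also have "\<dots> \<le> 2 * ((\<Sum>x\<in>A. ?h x) / card A)"
    using A(4) by simp
  finally have "real (n + 1 - card ?S) / (18 * real n) \<le> (\<Sum>x\<in>A. ?h x) / card A / (9 * real n)"
    using assms(3) by (simp add: field_simps)
  also have "\<dots> \<le> (\<Sum>x\<in>A. measure_pmf.prob (semo_mut n x) {z. ones z \<notin> ?S}) / card A"
    using A(2) P(3) assms(3) by (intro mean_prob_escape_ge) auto
  finally show ?thesis
    using A that by blast
qed

lemma NMUAR_escape_mean_ge:
  assumes "valid_pop n mut P" "mut \<in> {semo_mut, gsemo_mut}" "cdc_or_hvc D" "4 \<le> n" "card (ones ` P) \<le> n"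
  obtains A where "NMUAR (D (OneMinMax n)) P = pmf_of_set A" "A \<subseteq> P" "A \<noteq> {}"
    "real (n + 1 - card (ones ` P)) / (288 * real n)
       \<le> (\<Sum>x\<in>A. measure_pmf.prob (mut n x) {z. ones z \<notin> ones ` P}) / card A"
proof -
  let ?m = "real (n + 1 - card (ones ` P))"
  have "1 \<le> card (ones ` P)"
    using valid_popD(1,2)[OF assms(1)] by (simp add: Suc_le_eq card_gt_0_iff)
  then have "?m \<le> real n"
    by simp
  show ?thesis
  proof (cases "\<exists>y\<in>P. surrounded (ones ` P) (ones y)")
    case True
    then obtain y where y: "y \<in> P" "surrounded (ones ` P) (ones y)"
      by blast
    obtain A where A: "NMUAR (D (OneMinMax n)) P = pmf_of_set A" "A \<subseteq> P" "A \<noteq> {}"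
      "?m / (72 * real n) \<le> (\<Sum>x\<in>A. measure_pmf.prob (mut n x) {z. ones z \<notin> ones ` P}) / card A"
      by (rule NMUAR_escape_mean_ge_surrounded[OF assms y])
    have "?m / (288 * real n) \<le> ?m / (72 * real n)"
      using assms(4) by (intro divide_left_mono) auto
    then show ?thesis
      by (rule that[OF A(1-3) order_trans[OF _ A(4)]])
  next
    case False
    then have no_surrounded: "\<forall>c\<in>ones ` P. \<not> surrounded (ones ` P) c"
      by blast
    consider "mut = gsemo_mut" | "mut = semo_mut"
      using assms(2) by blast
    then show ?thesis
    proof cases
      case 1
      obtain A where A: "NMUAR (D (OneMinMax n)) P = pmf_of_set A" "A \<subseteq> P" "A \<noteq> {}"
        "1 / 144 \<le> (\<Sum>x\<in>A. measure_pmf.prob (mut n x) {z. ones z \<notin> ones ` P}) / card A"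
        using NMUAR_escape_mean_ge_gsemo[OF _ assms(4) no_surrounded] assms(1) 1 by blast
      have "?m / (288 * real n) \<le> 1 / 144"
        using \<open>?m \<le> real n\<close> assms(4) by (simp add: field_simps)
      then show ?thesis
        by (rule that[OF A(1-3) order_trans[OF _ A(4)]])
    next
      case 2
      obtain A where A: "NMUAR (D (OneMinMax n)) P = pmf_of_set A" "A \<subseteq> P" "A \<noteq> {}"
        "?m / (18 * real n) \<le> (\<Sum>x\<in>A. measure_pmf.prob (mut n x) {z. ones z \<notin> ones ` P}) / card A"
        using NMUAR_escape_mean_ge_semo[OF _ assms(3,4) no_surrounded] assms(1) 2 by blast
      have "?m / (288 * real n) \<le> ?m / (18 * real n)"
        using assms(4) by (intro divide_left_mono) auto
      then show ?thesis
        by (rule that[OF A(1-3) order_trans[OF _ A(4)]])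
    qed
  qed
qed

lemma escape_prob_NMUAR_ge:
  assumes "valid_pop n mut P" "mut \<in> {semo_mut, gsemo_mut}" "cdc_or_hvc D" "4 \<le> n" "card (ones ` P) \<le> n"
  shows "ennreal (real (n + 1 - card (ones ` P)) / (288 * real n))
           \<le> (\<integral>\<^sup>+x. ennreal (measure_pmf.prob (mut n x) {z. ones z \<notin> ones ` P})
                 \<partial>measure_pmf (NMUAR (D (OneMinMax n)) P))"
proof -
  obtain A where A: "NMUAR (D (OneMinMax n)) P = pmf_of_set A" "A \<subseteq> P" "A \<noteq> {}"
    "real (n + 1 - card (ones ` P)) / (288 * real n)
       \<le> (\<Sum>x\<in>A. measure_pmf.prob (mut n x) {z. ones z \<notin> ones ` P}) / card A"
    by (rule NMUAR_escape_mean_ge[OF assms])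
  have "finite A"
    by (rule finite_subset[OF A(2) valid_popD(1)[OF assms(1)]])
  show ?thesis
    unfolding A(1) by (rule nn_integral_pmf_of_set_ge[OF \<open>finite A\<close> A(3) _ A(4)]) simp
qed

section \<open>Drift\<close>

lemma harm_potential_drift:
  fixes M :: "'a pmf" and k :: "'a \<Rightarrow> nat"
  assumes "0 < m" "0 < c" "\<And>y. y \<in> set_pmf M \<Longrightarrow> k y = m \<or> k y = m - 1"
    and "ennreal (m / c) \<le> emeasure (measure_pmf M) {y. k y < m}"
  shows "(\<integral>\<^sup>+y. ennreal (c * harm (k y)) \<partial>measure_pmf M) + 1 \<le> ennreal (c * harm m)"
proof -
  have split: "ennreal (c * harm (k y)) + ennreal (c / m) * indicator {y. k y < m} y = ennreal (c * harm m)"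
    if "y \<in> set_pmf M" for y
  proof (cases "k y = m")
    case False
    then have "Suc (k y) = m"
      using assms(1,3) that by force
    then have harm_m: "c * harm m = c * harm (k y) + c / m"
      by (auto simp: harm_Suc field_simps)
    have "k y < m"
      using \<open>Suc (k y) = m\<close> by simp
    then have "ennreal (c * harm (k y)) + ennreal (c / m) * indicator {y. k y < m} y
                 = ennreal (c * harm (k y)) + ennreal (c / m)"
      by simp
    also have "\<dots> = ennreal (c * harm m)"
      unfolding harm_m using assms(2) by (simp add: ennreal_plus harm_nonneg)
    finally show ?thesis .
  qed simp
  have "(\<integral>\<^sup>+y. ennreal (c * harm (k y)) \<partial>measure_pmf M) + ennreal (c / m) * emeasure (measure_pmf M) {y. k y < m}
          = (\<integral>\<^sup>+y. ennreal (c * harm (k y)) + ennreal (c / m) * indicator {y. k y < m} y \<partial>measure_pmf M)"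
    by (simp add: nn_integral_add nn_integral_cmult_indicator)
  also have "\<dots> = (\<integral>\<^sup>+y. ennreal (c * harm m) \<partial>measure_pmf M)"
    using split by (intro nn_integral_cong_AE AE_pmfI) auto
  also have "\<dots> = ennreal (c * harm m)"
    by (simp add: measure_pmf.emeasure_space_1)
  finally have eq: "(\<integral>\<^sup>+y. ennreal (c * harm (k y)) \<partial>measure_pmf M)
                      + ennreal (c / m) * emeasure (measure_pmf M) {y. k y < m} = ennreal (c * harm m)" .
  have "1 = ennreal (c / m) * ennreal (m / c)"
    using assms(1,2) by (simp add: ennreal_mult[symmetric])
  also have "\<dots> \<le> ennreal (c / m) * emeasure (measure_pmf M) {y. k y < m}"
    using assms(4) by (rule mult_left_mono) simp
  finally show ?thesis
    using eq add_left_mono by metis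
qed

definition missing_counts :: "nat \<Rightarrow> pop \<Rightarrow> nat" where
  "missing_counts n P = n + 1 - card (ones ` P)"

lemma missing_counts_update:
  "finite P \<Longrightarrow> missing_counts n (update (OneMinMax n) P s)
     = (if ones s \<in> ones ` P then missing_counts n P else missing_counts n P - 1)"
  by (simp add: missing_counts_def ones_update_OneMinMax card_insert_if)

lemma missing_counts_eq_0_iff:
  assumes "valid_pop n mut P"
  shows "missing_counts n P = 0 \<longleftrightarrow> covers_front n P"
proof -
  note P = valid_popD[OF assms]
  have "missing_counts n P = 0 \<longleftrightarrow> ones ` P = {..n}"
  proof
    assume "missing_counts n P = 0"
    then have "card {..n} \<le> card (ones ` P)"
      by (simp add: missing_counts_def)
    then show "ones ` P = {..n}"
      using P(5) by (intro card_seteq) auto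
  qed (simp add: missing_counts_def)
  then show ?thesis
    using covers_front_iff[OF P(3)] by simp
qed

lemma emeasure_semo_step_new_count:
  assumes "0 < missing_counts n P" "finite P"
  shows "emeasure (measure_pmf (semo_step (OneMinMax n) M Dv P)) {Q. missing_counts n Q < missing_counts n P}
           = (\<integral>\<^sup>+x. ennreal (measure_pmf.prob (M x) {s. ones s \<notin> ones ` P}) \<partial>measure_pmf (NMUAR Dv P))"
proof -
  have "{s. missing_counts n (update (OneMinMax n) P s) < missing_counts n P} = {s. ones s \<notin> ones ` P}"
    using assms missing_counts_update[OF assms(2)] by auto
  then have "emeasure (measure_pmf (semo_step (OneMinMax n) M Dv P)) {Q. missing_counts n Q < missing_counts n P}
               = (\<integral>\<^sup>+x. emeasure (measure_pmf (M x)) {s. ones s \<notin> ones ` P} \<partial>measure_pmf (NMUAR Dv P))"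
    by (simp add: semo_step_def vimage_def)
  then show ?thesis
    by (simp add: measure_pmf.emeasure_eq_measure)
qed

lemma OneMinMax_drift:
  assumes "valid_pop n mut P" "mut \<in> {semo_mut, gsemo_mut}" "cdc_or_hvc D" "4 \<le> n"
  defines "\<Phi> \<equiv> \<lambda>Q. ennreal (288 * real n * harm (missing_counts n Q))"
  shows "(\<integral>\<^sup>+Q. \<Phi> Q \<partial>measure_pmf (semo_step (OneMinMax n) (mut n) (D (OneMinMax n)) P))
           + indicator {Q. \<not> covers_front n Q} P \<le> \<Phi> P"
proof -
  note P = valid_popD[OF assms(1)]
  let ?M = "semo_step (OneMinMax n) (mut n) (D (OneMinMax n)) P"
  let ?m = "missing_counts n P"
  have support: "missing_counts n Q = ?m \<or> missing_counts n Q = ?m - 1" if Q: "Q \<in> set_pmf ?M" for Q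
  proof -
    obtain x s where "x \<in> P" "s \<in> set_pmf (mut n x)" "Q = update (OneMinMax n) P s"
      by (rule set_pmf_semo_step[OF P(1,2) Q])
    then show ?thesis
      using missing_counts_update[OF P(1)] by simp
  qed
  show ?thesis
  proof (cases "?m = 0")
    case True
    then have "\<Phi> Q = 0" if "Q \<in> set_pmf ?M" for Q
      using support[OF that] by (simp add: \<Phi>_def harm_def)
    then have "(\<integral>\<^sup>+Q. \<Phi> Q \<partial>measure_pmf ?M) = 0"
      by (simp add: nn_integral_0_iff_AE AE_pmfI)
    then show ?thesis
      using True missing_counts_eq_0_iff[OF assms(1)] by (simp add: \<Phi>_def harm_def)
  next
    case False
    have "emeasure (measure_pmf ?M) {Q. missing_counts n Q < ?m}
            = (\<integral>\<^sup>+x. ennreal (measure_pmf.prob (mut n x) {s. ones s \<notin> ones ` P})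
                 \<partial>measure_pmf (NMUAR (D (OneMinMax n)) P))"
      using False P(1) by (intro emeasure_semo_step_new_count) auto
    also have "\<dots> \<ge> ennreal (real ?m / (288 * real n))"
      unfolding missing_counts_def
      by (rule escape_prob_NMUAR_ge[OF assms(1-4)]) (use False in \<open>simp add: missing_counts_def\<close>)
    finally have "(\<integral>\<^sup>+Q. \<Phi> Q \<partial>measure_pmf ?M) + 1 \<le> \<Phi> P"
      unfolding \<Phi>_def using False assms(4) support by (intro harm_potential_drift) auto
    then show ?thesis
      using False missing_counts_eq_0_iff[OF assms(1)] by simp
  qed
qed

lemma suminf_emeasure_le_potential:
  fixes \<mu> :: "nat \<Rightarrow> 's pmf" and K :: "'s \<Rightarrow> 's pmf" and \<Phi> :: "'s \<Rightarrow> ennreal"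
  assumes \<mu>_Suc: "\<And>t. \<mu> (Suc t) = bind_pmf (\<mu> t) K"
    and drift: "\<And>t s. s \<in> set_pmf (\<mu> t) \<Longrightarrow> (\<integral>\<^sup>+s'. \<Phi> s' \<partial>measure_pmf (K s)) + indicator B s \<le> \<Phi> s"
  shows "(\<Sum>t. emeasure (measure_pmf (\<mu> t)) B) \<le> (\<integral>\<^sup>+s. \<Phi> s \<partial>measure_pmf (\<mu> 0))"
proof -
  define F where "F t = (\<integral>\<^sup>+s. \<Phi> s \<partial>measure_pmf (\<mu> t))" for t
  have step: "F (Suc t) + emeasure (measure_pmf (\<mu> t)) B \<le> F t" for t
  proof -
    have "F (Suc t) + emeasure (measure_pmf (\<mu> t)) B
            = (\<integral>\<^sup>+s. (\<integral>\<^sup>+s'. \<Phi> s' \<partial>measure_pmf (K s)) + indicator B s \<partial>measure_pmf (\<mu> t))"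
      by (simp add: F_def \<mu>_Suc nn_integral_add)
    also have "\<dots> \<le> F t"
      unfolding F_def by (intro nn_integral_mono_AE AE_pmfI drift)
    finally show ?thesis .
  qed
  have "(\<Sum>t<T. emeasure (measure_pmf (\<mu> t)) B) + F T \<le> F 0" for T
  proof (induction T)
    case (Suc T)
    have "(\<Sum>t<Suc T. emeasure (measure_pmf (\<mu> t)) B) + F (Suc T)
            = (\<Sum>t<T. emeasure (measure_pmf (\<mu> t)) B) + (F (Suc T) + emeasure (measure_pmf (\<mu> T)) B)"
      by (simp add: algebra_simps)
    also have "\<dots> \<le> (\<Sum>t<T. emeasure (measure_pmf (\<mu> t)) B) + F T"
      by (intro add_left_mono step)
    also have "\<dots> \<le> F 0"
      by (rule Suc.IH)
    finally show ?case .
  qed simp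
  then have "(\<Sum>t<T. emeasure (measure_pmf (\<mu> t)) B) \<le> F 0" for T
    by (rule order_trans[OF add_increasing2[OF zero_le order.refl]])
  then show ?thesis
    unfolding F_def by (intro suminf_le_const summableI)
qed

definition pop_dist :: "nat \<Rightarrow> (nat \<Rightarrow> indiv \<Rightarrow> indiv pmf) \<Rightarrow> (objf \<Rightarrow> pop \<Rightarrow> indiv \<Rightarrow> ereal) \<Rightarrow> nat \<Rightarrow> pop pmf" where
  "pop_dist n mut D t = map_pmf last (trajectory n mut D t)"

lemma pop_dist_0: "pop_dist n mut D 0 = map_pmf (\<lambda>s. {s}) (pmf_of_set {xs. length xs = n})"
  by (simp add: pop_dist_def pmf.map_comp o_def)

lemma pop_dist_Suc:
  "pop_dist n mut D (Suc t) = bind_pmf (pop_dist n mut D t) (semo_step (OneMinMax n) (mut n) (D (OneMinMax n)))"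
  by (simp add: pop_dist_def map_bind_pmf bind_map_pmf pmf.map_comp o_def)

lemma bool_lists_length:
  shows "finite {xs :: bool list. length xs = n}" and "{xs :: bool list. length xs = n} \<noteq> {}"
proof -
  show "finite {xs :: bool list. length xs = n}"
    using finite_lists_length_eq[of "UNIV :: bool set" n] by simp
  have "replicate n False \<in> {xs. length xs = n}"
    by simp
  then show "{xs :: bool list. length xs = n} \<noteq> {}"
    by blast
qed

lemma valid_pop_dist:
  assumes "mut \<in> {semo_mut, gsemo_mut}" "0 < n" "P \<in> set_pmf (pop_dist n mut D t)"
  shows "valid_pop n mut P"
  using assms(3)
proof (induction t arbitrary: P)
  case 0
  then obtain s where "length s = n" "P = {s}"
    by (auto simp: pop_dist_0 set_pmf_of_set[OF bool_lists_length(2,1)])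
  then show ?case
    by (auto simp: valid_pop_def) (metis atLeastAtMost_singleton)
next
  case (Suc t)
  then obtain Q where "Q \<in> set_pmf (pop_dist n mut D t)"
    "P \<in> set_pmf (semo_step (OneMinMax n) (mut n) (D (OneMinMax n)) Q)"
    by (auto simp: pop_dist_Suc)
  then show ?case
    using Suc.IH valid_pop_semo_step[OF _ assms(1,2)] by blast
qed

lemma expected_time_le_suminf_pop_dist:
  "expected_time n mut D \<le> (\<Sum>t. emeasure (measure_pmf (pop_dist n mut D t)) {P. \<not> covers_front n P})"
proof -
  have "ps \<noteq> []" if "ps \<in> set_pmf (trajectory n mut D t)" for ps t
    using that by (induction t arbitrary: ps) (auto simp: set_pmf_of_set[OF bool_lists_length(2,1)])
  then have "measure_pmf.prob (trajectory n mut D t) {ps. \<forall>P\<in>set ps. \<not> covers_front n P}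
               \<le> measure_pmf.prob (pop_dist n mut D t) {P. \<not> covers_front n P}" for t
    by (auto simp: pop_dist_def vimage_def intro!: measure_pmf.finite_measure_mono_AE AE_pmfI)
  then show ?thesis
    unfolding expected_time_def
    by (intro suminf_le summableI) (simp add: measure_pmf.emeasure_eq_measure)
qed

lemma expected_time_le_harm:
  assumes "mut \<in> {semo_mut, gsemo_mut}" "cdc_or_hvc D" "4 \<le> n"
  shows "expected_time n mut D \<le> ennreal (288 * real n * harm n)"
proof -
  let ?\<Phi> = "\<lambda>P. ennreal (288 * real n * harm (missing_counts n P))"
  have "expected_time n mut D \<le> (\<Sum>t. emeasure (measure_pmf (pop_dist n mut D t)) {P. \<not> covers_front n P})"
    by (rule expected_time_le_suminf_pop_dist)
  also have "\<dots> \<le> (\<integral>\<^sup>+P. ?\<Phi> P \<partial>measure_pmf (pop_dist n mut D 0))"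
  proof (rule suminf_emeasure_le_potential[where \<mu> = "pop_dist n mut D", OF pop_dist_Suc])
    fix t P
    assume "P \<in> set_pmf (pop_dist n mut D t)"
    then have "valid_pop n mut P"
      using assms(1,3) by (intro valid_pop_dist) auto
    then show "(\<integral>\<^sup>+Q. ?\<Phi> Q \<partial>measure_pmf (semo_step (OneMinMax n) (mut n) (D (OneMinMax n)) P))
                 + indicator {P. \<not> covers_front n P} P \<le> ?\<Phi> P"
      using assms by (rule OneMinMax_drift)
  qed
  also have "\<dots> = ennreal (288 * real n * harm n)"
    by (simp add: pop_dist_0 missing_counts_def measure_pmf.emeasure_space_1)
  finally show ?thesis .
qed

lemma harm_le_two_ln:
  assumes "3 \<le> n"
  shows "harm n \<le> 2 * ln (real n)"
proof -
  have "harm n - ln (real n) \<le> harm 1 - ln (real (1::nat))"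
    using euler_mascheroni_sequence_decreasing[of 1 n] assms by simp
  then have "harm n \<le> 1 + ln (real n)"
    by (simp add: harm_expand)
  moreover have "exp 1 < (3::real)"
    using e_less_272 by simp
  then have "1 < ln (3::real)"
    using ln_less_cancel_iff[of "exp 1" 3] by simp
  moreover have "ln 3 \<le> ln (real n)"
    using assms by simp
  ultimately show ?thesis
    by simp
qed

theorem theorem8:
  shows "(\<forall>mut\<in>{semo_mut, gsemo_mut}.
            (\<exists>C N. \<forall>n\<ge>N. expected_time n mut CDC \<le> ennreal (C * real n * ln (real n)))
          \<and> (\<forall>r::real. r \<ge> 1 \<longrightarrow>
            (\<exists>C N. \<forall>n\<ge>N. expected_time n mut (HVC (-r, -r)) \<le> ennreal (C * real n * ln (real n)))))"
proof -
  have bound: "\<exists>C N. \<forall>n\<ge>N. expected_time n mut D \<le> ennreal (C * real n * ln (real n))"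
    if "mut \<in> {semo_mut, gsemo_mut}" "cdc_or_hvc D" for mut D
  proof (intro exI allI impI)
    fix n :: nat
    assume "4 \<le> n"
    have "expected_time n mut D \<le> ennreal (288 * real n * harm n)"
      using that \<open>4 \<le> n\<close> by (rule expected_time_le_harm)
    also have "\<dots> \<le> ennreal (576 * real n * ln (real n))"
      using harm_le_two_ln[of n] \<open>4 \<le> n\<close> by (intro ennreal_leI) simp
    finally show "expected_time n mut D \<le> ennreal (576 * real n * ln (real n))" .
  qed
  show ?thesis
  proof (intro ballI conjI allI impI)
    fix mut
    assume mut: "mut \<in> {semo_mut, gsemo_mut}"
    then show "\<exists>C N. \<forall>n\<ge>N. expected_time n mut CDC \<le> ennreal (C * real n * ln (real n))"
      by (rule bound) (simp add: cdc_or_hvc_def)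
    fix r :: real
    assume "1 \<le> r"
    with mut show "\<exists>C N. \<forall>n\<ge>N. expected_time n mut (HVC (-r, -r)) \<le> ennreal (C * real n * ln (real n))"
      by (intro bound) (auto simp: cdc_or_hvc_def)
  qed
qed

end
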